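(* Let $\Lambda$ be the double of a cellular decomposition of a compact oriented surface without boundary, with a discrete conformal structure $\rho$. Let $\mathcal{A},\mathcal{B}$ be two non-intersecting simple loops in $\Lambda$ such that exactly one edge of $\mathcal{A}$ is dual to an edge of $\mathcal{B}$. Then there exists a unique holomorphic $1$-form $\Phi_{\mathcal{AB}}$ on $\Lambda$ such that $\operatorname{Re}\int_{\mathcal{B}}\Phi_{\mathcal{AB}}=1$ and $\int_\gamma\Phi_{\mathcal{AB}}\in i\mathbb{R}$ for every loop $\gamma$ in $\Lambda$ none of whose edges is dual to an edge of $\mathcal{A}$.
   Context: $\Lambda=\Gamma\sqcup\Gamma^*$ with $\Gamma$ a cellular decomposition and $\Gamma^*$ its Poincaré dual (each edge $e$ crossed by one dual edge $e^*$, $e^{**}=-e$); $\rho:\Lambda_1\to(0,\infty)$ with $\rho(e)\rho(e^* )=1$. Hodge star on 1-forms: $\int_e*\alpha=-\rho(e^* )\int_{e^*}\alpha$. A 1-form $\alpha$ on $\Lambda$ is holomorphic if it is closed ($\oint_{\partial F}\alpha=0$ on every face $F$ of $\Gamma$ and $\Gamma^*$) and $*\alpha=-i\alpha$. *)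

theory Defs
  imports Complex_Main
begin

text \<open>
Combinatorial encoding of a cellular decomposition Gamma of a compact (connected) oriented
surface without boundary: a combinatorial map on a finite set of darts D (oriented edges of
Gamma) with a fixed-point-free involution al (reversal of orientation) and a permutation sg
(counterclockwise rotation of darts around their common initial vertex).
Vertices of Gamma are the sg-orbits, faces of Gamma are the orbits of sg o al.
The double Lambda = Gamma disjoint-union Gamma^*: its oriented edges are Prim d (the dart d of
Gamma) and Dua d (the dual edge d^* of Gamma^*, crossing d) for d in D.
\<close>

datatype 'd ledge = Prim 'd | Dua 'd

definition comb_map :: "'d set \<Rightarrow> ('d \<Rightarrow> 'd) \<Rightarrow> ('d \<Rightarrow> 'd) \<Rightarrow> bool" where
  "comb_map D al sg \<longleftrightarrow> finite D \<and> D \<noteq> {} \<and>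
     bij_betw al D D \<and> bij_betw sg D D \<and>
     (\<forall>d\<in>D. al (al d) = d \<and> al d \<noteq> d) \<and>
     (\<forall>x\<in>D. \<forall>y\<in>D. (x, y) \<in> ({(u, al u) | u. u \<in> D} \<union> {(u, sg u) | u. u \<in> D})\<^sup>*)"

definition orbit :: "('d \<Rightarrow> 'd) \<Rightarrow> 'd \<Rightarrow> 'd set" where
  "orbit f d = {(f ^^ n) d | n. True}"

definition ledges :: "'d set \<Rightarrow> 'd ledge set" where
  "ledges D = Prim ` D \<union> Dua ` D"

fun lrev :: "('d \<Rightarrow> 'd) \<Rightarrow> 'd ledge \<Rightarrow> 'd ledge" where
  "lrev al (Prim d) = Prim (al d)"
| "lrev al (Dua d) = Dua (al d)"

text \<open>Duality e \<mapsto> e^*, with e^** = -e.\<close>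
fun ldual :: "('d \<Rightarrow> 'd) \<Rightarrow> 'd ledge \<Rightarrow> 'd ledge" where
  "ldual al (Prim d) = Dua d"
| "ldual al (Dua d) = Prim (al d)"

text \<open>Vertices of Lambda: (True, vertex of Gamma) or (False, face of Gamma = vertex of Gamma^*).\<close>
fun ltail :: "('d \<Rightarrow> 'd) \<Rightarrow> ('d \<Rightarrow> 'd) \<Rightarrow> 'd ledge \<Rightarrow> bool \<times> 'd set" where
  "ltail al sg (Prim d) = (True, orbit sg d)"
| "ltail al sg (Dua d) = (False, orbit (sg \<circ> al) d)"

definition lhead :: "('d \<Rightarrow> 'd) \<Rightarrow> ('d \<Rightarrow> 'd) \<Rightarrow> 'd ledge \<Rightarrow> bool \<times> 'd set" where
  "lhead al sg e = ltail al sg (lrev al e)"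

definition dual_edges :: "('d \<Rightarrow> 'd) \<Rightarrow> 'd ledge \<Rightarrow> 'd ledge \<Rightarrow> bool" where
  "dual_edges al e f \<longleftrightarrow> ldual al e = f \<or> ldual al e = lrev al f"

definition is_loop :: "'d set \<Rightarrow> ('d \<Rightarrow> 'd) \<Rightarrow> ('d \<Rightarrow> 'd) \<Rightarrow> 'd ledge list \<Rightarrow> bool" where
  "is_loop D al sg \<gamma> \<longleftrightarrow> \<gamma> \<noteq> [] \<and> set \<gamma> \<subseteq> ledges D \<and>
     (\<forall>i. Suc i < length \<gamma> \<longrightarrow> lhead al sg (\<gamma> ! i) = ltail al sg (\<gamma> ! Suc i)) \<and>
     lhead al sg (last \<gamma>) = ltail al sg (hd \<gamma>)"

definition simple_loop :: "'d set \<Rightarrow> ('d \<Rightarrow> 'd) \<Rightarrow> ('d \<Rightarrow> 'd) \<Rightarrow> 'd ledge list \<Rightarrow> bool" where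
  "simple_loop D al sg \<gamma> \<longleftrightarrow> is_loop D al sg \<gamma> \<and>
     distinct (map (ltail al sg) \<gamma>) \<and>
     (\<forall>i j. i < length \<gamma> \<longrightarrow> j < length \<gamma> \<longrightarrow> i \<noteq> j \<longrightarrow>
        \<gamma> ! i \<noteq> \<gamma> ! j \<and> \<gamma> ! i \<noteq> lrev al (\<gamma> ! j))"

definition loops_disjoint :: "('d \<Rightarrow> 'd) \<Rightarrow> ('d \<Rightarrow> 'd) \<Rightarrow> 'd ledge list \<Rightarrow> 'd ledge list \<Rightarrow> bool" where
  "loops_disjoint al sg A B \<longleftrightarrow> set (map (ltail al sg) A) \<inter> set (map (ltail al sg) B) = {}"

definition conformal_structure :: "'d set \<Rightarrow> ('d \<Rightarrow> 'd) \<Rightarrow> ('d ledge \<Rightarrow> real) \<Rightarrow> bool" where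
  "conformal_structure D al \<rho> \<longleftrightarrow> (\<forall>e\<in>ledges D. \<rho> e > 0 \<and> \<rho> (lrev al e) = \<rho> e) \<and>
     (\<forall>d\<in>D. \<rho> (Prim d) * \<rho> (Dua d) = 1)"

text \<open>1-forms: functions on oriented edges, odd under reversal (zero off the edge set),
  \<open>\<alpha> e\<close> standing for the integral of the form along e.\<close>
definition one_form :: "'d set \<Rightarrow> ('d \<Rightarrow> 'd) \<Rightarrow> ('d ledge \<Rightarrow> complex) \<Rightarrow> bool" where
  "one_form D al \<alpha> \<longleftrightarrow> (\<forall>e\<in>ledges D. \<alpha> (lrev al e) = - \<alpha> e) \<and> (\<forall>e. e \<notin> ledges D \<longrightarrow> \<alpha> e = 0)"

definition hodge :: "('d \<Rightarrow> 'd) \<Rightarrow> ('d ledge \<Rightarrow> real) \<Rightarrow> ('d ledge \<Rightarrow> complex) \<Rightarrow> 'd ledge \<Rightarrow> complex" where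
  "hodge al \<rho> \<alpha> e = - of_real (\<rho> (ldual al e)) * \<alpha> (ldual al e)"

text \<open>Closedness: integral over the boundary of each face of Gamma (sg o al orbits, traversed
  by primal darts) and each face of Gamma^* (sg orbits = vertices of Gamma, traversed by dual
  edges) vanishes.\<close>
definition closed_form :: "'d set \<Rightarrow> ('d \<Rightarrow> 'd) \<Rightarrow> ('d \<Rightarrow> 'd) \<Rightarrow> ('d ledge \<Rightarrow> complex) \<Rightarrow> bool" where
  "closed_form D al sg \<alpha> \<longleftrightarrow>
     (\<forall>d\<in>D. (\<Sum>x\<in>orbit (sg \<circ> al) d. \<alpha> (Prim x)) = 0) \<and>
     (\<forall>d\<in>D. (\<Sum>x\<in>orbit sg d. \<alpha> (Dua x)) = 0)"

definition holomorphic_form :: "'d set \<Rightarrow> ('d \<Rightarrow> 'd) \<Rightarrow> ('d \<Rightarrow> 'd) \<Rightarrow> ('d ledge \<Rightarrow> real) \<Rightarrow> ('d ledge \<Rightarrow> complex) \<Rightarrow> bool" where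
  "holomorphic_form D al sg \<rho> \<alpha> \<longleftrightarrow> one_form D al \<alpha> \<and> closed_form D al sg \<alpha> \<and>
     (\<forall>e\<in>ledges D. hodge al \<rho> \<alpha> e = - \<i> * \<alpha> e)"

definition loop_integral :: "('d ledge \<Rightarrow> complex) \<Rightarrow> 'd ledge list \<Rightarrow> complex" where
  "loop_integral \<alpha> \<gamma> = sum_list (map \<alpha> \<gamma>)"

end

theory Submission
  imports Defs "Jordan_Normal_Form.Determinant"
begin

text \<open>
  A holomorphic form \<open>\<Phi>\<close> is determined by its real parts a on \<open>\<Gamma>\<close> and b on \<open>\<Gamma>\<^sup>*\<close>, since \<open>*\<Phi> = -i\<Phi>\<close>
  fixes the imaginary parts, and \<open>\<Phi>\<close> is holomorphic iff a and b are discrete harmonic (closed, and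
  coclosed for the weights \<open>\<rho>\<close>). Loops of \<open>\<Lambda>\<close> stay on one side, so the period conditions split into
  conditions on a and on b, and the crossing condition puts \<open>\<A>\<close> and \<open>\<B>\<close> on opposite sides, say
  \<open>\<A>\<close> in \<open>\<Gamma>\<close> and \<open>\<B>\<close> in \<open>\<Gamma>\<^sup>*\<close>. Then all periods of a vanish, so a is exact and coclosed, hence zero
  by the energy identity. For b one needs the unique harmonic form on \<open>\<Gamma>\<^sup>*\<close> with \<open>\<B>\<close>-period 1 whose
  periods vanish on loops not crossing \<open>\<A>\<close>: subtracting a potential leaves a closed form supported
  on the edges crossing \<open>\<A>\<close>, i.e. a multiple of the signed crossing form of \<open>\<A>\<close>, and the \<open>\<B>\<close>-period
  fixes the multiple; conversely, the signed crossing form plus the coboundary of a solution of a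
  discrete Poisson equation is harmonic.
\<close>

section \<open>Linear systems and orbits\<close>

lemma injective_linear_system_solvable:
  fixes V :: "'v set" and a :: "'v \<Rightarrow> 'v \<Rightarrow> 'a :: field"
  assumes fin: "finite V"
    and inj: "\<And>h. \<forall>v\<in>V. (\<Sum>u\<in>V. a v u * h u) = 0 \<Longrightarrow> \<forall>v\<in>V. h v = 0"
  shows "\<exists>h. \<forall>v\<in>V. (\<Sum>u\<in>V. a v u * h u) = g v"
proof -
  define n where "n = card V"
  obtain e where e: "bij_betw e {..<n} V"
    using ex_bij_betw_nat_finite[OF fin] unfolding n_def atLeast0LessThan by blast
  define ei where "ei = the_inv_into {..<n} e"
  have ei: "ei u < n" "e (ei u) = u" if "u \<in> V" for u
    using that e the_inv_into_into[of e "{..<n}" u] f_the_inv_into_f_bij_betw[of e "{..<n}" V u]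
    unfolding ei_def bij_betw_def by auto
  have eie: "ei (e i) = i" if "i < n" for i
    using that e unfolding ei_def bij_betw_def by (simp add: the_inv_into_f_f)
  define M where "M = mat n n (\<lambda>(i, j). a (e i) (e j))"
  have M: "M \<in> carrier_mat n n" by (simp add: M_def)
  have Mv: "(M *\<^sub>v y) $ i = (\<Sum>u\<in>V. a (e i) u * y $ ei u)" if "y \<in> carrier_vec n" "i < n" for y i
  proof -
    have "(M *\<^sub>v y) $ i = (\<Sum>j<n. a (e i) (e j) * y $ ei (e j))"
      using that by (simp add: M_def mult_mat_vec_def scalar_prod_def atLeast0LessThan eie)
    also have "\<dots> = (\<Sum>u\<in>V. a (e i) u * y $ ei u)"
      by (rule sum.reindex_bij_betw[OF e])
    finally show ?thesis .
  qed
  have "det M \<noteq> 0"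
  proof
    assume "det M = 0"
    then obtain y where y: "y \<in> carrier_vec n" "y \<noteq> 0\<^sub>v n" "M *\<^sub>v y = 0\<^sub>v n"
      using det_0_iff_vec_prod_zero_field[OF M] by blast
    have "\<forall>v\<in>V. (\<Sum>u\<in>V. a v u * y $ ei u) = 0"
      using Mv[OF y(1)] y(3) ei by (metis index_zero_vec(1))
    then have y0: "\<forall>v\<in>V. y $ ei v = 0" by (rule inj)
    have "y $ i = 0" if "i < n" for i
      using y0[rule_format, of "e i"] eie[OF that] e that by (auto simp: bij_betw_def)
    then have "y = 0\<^sub>v n" using y(1) by (intro eq_vecI) auto
    with y(2) show False ..
  qed
  then obtain B where B: "B \<in> carrier_mat n n" "M * B = 1\<^sub>m n"
    using det_non_zero_imp_unit[OF M] by (auto simp: Units_def ring_mat_def)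
  define z where "z = B *\<^sub>v vec n (\<lambda>i. g (e i))"
  have z: "z \<in> carrier_vec n" using B by (simp add: z_def)
  have Mz: "M *\<^sub>v z = vec n (\<lambda>i. g (e i))"
    using assoc_mult_mat_vec[OF M B(1), of "vec n (\<lambda>i. g (e i))"] B(2) by (simp add: z_def)
  show ?thesis
  proof (intro exI ballI)
    fix v assume "v \<in> V"
    then show "(\<Sum>u\<in>V. a v u * z $ ei u) = g v"
      using Mv[OF z, of "ei v"] Mz ei by simp
  qed
qed

lemma mem_orbit_iff: "y \<in> orbit f x \<longleftrightarrow> (\<exists>n. y = (f ^^ n) x)"
  by (simp add: orbit_def)

lemma orbit_self: "x \<in> orbit f x"
  unfolding mem_orbit_iff by (metis funpow_0)

lemma orbit_subset:
  assumes "f ` D \<subseteq> D" and "x \<in> D"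
  shows "orbit f x \<subseteq> D"
proof -
  have "(f ^^ n) x \<in> D" for n by (induction n) (use assms in auto)
  then show ?thesis by (auto simp: orbit_def)
qed

lemma orbit_apply_subset: "orbit f (f x) \<subseteq> orbit f x"
proof
  fix y assume "y \<in> orbit f (f x)"
  then obtain n where "y = (f ^^ n) (f x)" by (auto simp: orbit_def)
  then have "y = (f ^^ Suc n) x" by (simp only: funpow_Suc_right comp_apply)
  then show "y \<in> orbit f x" unfolding mem_orbit_iff by blast
qed

lemma permutation_return:
  assumes "finite D" and "bij_betw f D D" and "x \<in> D"
  obtains n where "n > 0" and "(f ^^ n) x = x"
proof -
  have "(\<lambda>n. (f ^^ n) x) ` UNIV \<subseteq> D"
    using assms(2,3) bij_betw_funpow[OF assms(2)] by (auto simp: bij_betw_def)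
  then have "\<not> inj (\<lambda>n. (f ^^ n) x)"
    using assms(1) finite_subset infinite_UNIV_nat finite_imageD by blast
  then obtain i j where ij: "i < j" "(f ^^ i) x = (f ^^ i) ((f ^^ (j - i)) x)"
    unfolding inj_def by (metis funpow_add comp_apply le_add_diff_inverse less_le not_less_iff_gr_or_eq)
  have "inj_on (f ^^ i) D" using bij_betw_funpow[OF assms(2)] by (simp add: bij_betw_def)
  moreover have "(f ^^ (j - i)) x \<in> D"
    using bij_betw_funpow[OF assms(2)] assms(3) by (auto simp: bij_betw_def)
  ultimately have "(f ^^ (j - i)) x = x" using ij(2) assms(3) by (metis inj_onD)
  with ij(1) show ?thesis by (intro that[of "j - i"]) simp_all
qed

lemma orbit_apply:
  assumes "finite D" and "bij_betw f D D" and "x \<in> D"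
  shows "orbit f (f x) = orbit f x"
proof
  show "orbit f (f x) \<subseteq> orbit f x" by (rule orbit_apply_subset)
  obtain n where n: "n > 0" "(f ^^ n) x = x" using permutation_return[OF assms] .
  have "(f ^^ k) x = (f ^^ (k + n - 1)) (f x)" for k
  proof -
    have "(f ^^ (k + n - 1)) (f x) = (f ^^ (k + n)) x"
      using n(1) funpow_Suc_right[of "k + n - 1" f] by simp
    also have "\<dots> = (f ^^ k) x" using n(2) by (simp add: funpow_add)
    finally show ?thesis by simp
  qed
  then show "orbit f x \<subseteq> orbit f (f x)" unfolding orbit_def by blast
qed

lemma orbit_eq_if_mem:
  assumes "finite D" and "bij_betw f D D" and "x \<in> D" and "y \<in> orbit f x"
  shows "orbit f y = orbit f x"
proof -
  obtain k where y: "y = (f ^^ k) x" using assms(4) by (auto simp: orbit_def)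
  have "orbit f ((f ^^ k) x) = orbit f x"
  proof (induction k)
    case (Suc k)
    have "(f ^^ k) x \<in> D" using bij_betw_funpow[OF assms(2)] assms(3) by (auto simp: bij_betw_def)
    then show ?case using orbit_apply[OF assms(1,2)] Suc by simp
  qed simp
  then show ?thesis using y by simp
qed

lemma image_orbit:
  assumes "finite D" and "bij_betw f D D" and "x \<in> D"
  shows "f ` orbit f x = orbit f x"
proof -
  have "f ` orbit f x = orbit f (f x)"
    unfolding orbit_def by (auto simp: funpow_swap1[symmetric])
  then show ?thesis using orbit_apply[OF assms] by simp
qed

section \<open>Discrete harmonic forms on a weighted map\<close>

definition orbit_cycle :: "'a set \<Rightarrow> ('a \<Rightarrow> 'a) \<Rightarrow> ('a \<Rightarrow> 'a) \<Rightarrow> 'a list \<Rightarrow> bool" where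
  "orbit_cycle D al f xs \<longleftrightarrow> xs \<noteq> [] \<and> set xs \<subseteq> D \<and>
     (\<forall>i. Suc i < length xs \<longrightarrow> orbit f (al (xs ! i)) = orbit f (xs ! Suc i)) \<and>
     orbit f (al (last xs)) = orbit f (hd xs)"

definition harmonic ::
    "'a set \<Rightarrow> ('a \<Rightarrow> 'a) \<Rightarrow> ('a \<Rightarrow> 'a) \<Rightarrow> ('a \<Rightarrow> 'a) \<Rightarrow> ('a \<Rightarrow> real) \<Rightarrow> ('a \<Rightarrow> real) \<Rightarrow> bool" where
  "harmonic D al p q w c \<longleftrightarrow> (\<forall>x\<in>D. c (al x) = - c x) \<and>
     (\<forall>y\<in>D. (\<Sum>x\<in>orbit q y. c x) = 0) \<and> (\<forall>y\<in>D. (\<Sum>x\<in>orbit p y. w x * c x) = 0)"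

lemma harmonic_diff:
  "harmonic D al p q w c \<Longrightarrow> harmonic D al p q w c' \<Longrightarrow> harmonic D al p q w (\<lambda>x. c x - c' x)"
  by (simp add: harmonic_def sum_subtractf right_diff_distrib)

lemma harmonic_scale:
  "harmonic D al p q w c \<Longrightarrow> harmonic D al p q w (\<lambda>x. r * c x)"
  unfolding harmonic_def by (simp add: mult.left_commute flip: sum_distrib_left)

text \<open>
  A connected map on the darts D: \<open>al\<close> reverses a dart, \<open>p\<close> rotates the darts around their common
  tail and \<open>q\<close> runs around faces, so the \<open>p\<close>-orbits are the vertices and the \<open>q\<close>-orbits are the
  vertices of the dual map; a dart x is an edge from \<open>orbit p x\<close> to \<open>orbit p (al x)\<close>.
\<close>

locale weighted_map =
  fixes D :: "'a set" and al p q :: "'a \<Rightarrow> 'a" and w :: "'a \<Rightarrow> real"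
  assumes finite_D: "finite D" and D_ne: "D \<noteq> {}"
    and al_D: "\<And>x. x \<in> D \<Longrightarrow> al x \<in> D"
    and al_al: "\<And>x. x \<in> D \<Longrightarrow> al (al x) = x"
    and al_ne: "\<And>x. x \<in> D \<Longrightarrow> al x \<noteq> x"
    and p_bij: "bij_betw p D D"
    and q_p: "\<And>x. x \<in> D \<Longrightarrow> q x = p (al x)"
    and connected: "\<And>x y. x \<in> D \<Longrightarrow> y \<in> D \<Longrightarrow>
        (x, y) \<in> ({(u, al u) | u. u \<in> D} \<union> {(u, p u) | u. u \<in> D})\<^sup>*"
    and w_pos: "\<And>x. x \<in> D \<Longrightarrow> w x > 0"
    and w_al: "\<And>x. x \<in> D \<Longrightarrow> w (al x) = w x"
begin

lemma al_bij: "bij_betw al D D"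
  by (rule bij_betwI[of al D D al]) (auto simp: al_D al_al)

lemma q_bij: "bij_betw q D D"
proof -
  have "bij_betw (p \<circ> al) D D" by (rule bij_betw_trans[OF al_bij p_bij])
  moreover have "\<And>x. x \<in> D \<Longrightarrow> (p \<circ> al) x = q x" by (simp add: q_p)
  ultimately show ?thesis using bij_betw_cong by blast
qed

lemma orbit_p_subset: "x \<in> D \<Longrightarrow> orbit p x \<subseteq> D"
  using p_bij by (intro orbit_subset) (auto simp: bij_betw_def)

lemma orbit_q_subset: "x \<in> D \<Longrightarrow> orbit q x \<subseteq> D"
  using q_bij by (intro orbit_subset) (auto simp: bij_betw_def)

lemma orbit_p_eq: "x \<in> D \<Longrightarrow> y \<in> orbit p x \<Longrightarrow> orbit p y = orbit p x"
  by (rule orbit_eq_if_mem[OF finite_D p_bij])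

lemma orbit_q_eq: "x \<in> D \<Longrightarrow> y \<in> orbit q x \<Longrightarrow> orbit q y = orbit q x"
  by (rule orbit_eq_if_mem[OF finite_D q_bij])

lemma mem_orbit_q_iff: "x \<in> D \<Longrightarrow> y \<in> D \<Longrightarrow> y \<in> orbit q x \<longleftrightarrow> orbit q y = orbit q x"
  using orbit_q_eq orbit_self by metis

lemma orbit_p_q: "x \<in> D \<Longrightarrow> orbit p (q x) = orbit p (al x)"
  using q_p orbit_apply[OF finite_D p_bij] al_D by simp

definition V :: "'a set set" where "V = orbit p ` D"

lemma finite_V: "finite V"
  unfolding V_def using finite_D by simp

lemma sum_by_vertices: "(\<Sum>x\<in>D. F (orbit p x) x) = (\<Sum>v\<in>V. \<Sum>x\<in>v. F v x)"
proof -
  have "(\<Sum>x\<in>D. F (orbit p x) x) = (\<Sum>v\<in>V. \<Sum>x | x \<in> D \<and> orbit p x = v. F (orbit p x) x)"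
    by (rule sum.group[symmetric, OF finite_D finite_V]) (auto simp: V_def)
  also have "\<dots> = (\<Sum>v\<in>V. \<Sum>x\<in>v. F v x)"
  proof (rule sum.cong[OF refl])
    fix v assume "v \<in> V"
    then obtain y where y: "y \<in> D" "v = orbit p y" by (auto simp: V_def)
    have "{x. x \<in> D \<and> orbit p x = v} = v"
    proof
      show "{x. x \<in> D \<and> orbit p x = v} \<subseteq> v" using orbit_self by auto
      show "v \<subseteq> {x. x \<in> D \<and> orbit p x = v}"
      proof
        fix x assume "x \<in> v"
        then show "x \<in> {x. x \<in> D \<and> orbit p x = v}"
          using y orbit_p_eq[of y x] orbit_p_subset[of y] by blast
      qed
    qed
    then show "(\<Sum>x | x \<in> D \<and> orbit p x = v. F (orbit p x) x) = (\<Sum>x\<in>v. F v x)"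
      by (metis (mono_tags, lifting) mem_Collect_eq sum.cong)
  qed
  finally show ?thesis .
qed

lemma sum_odd_eq_0:
  fixes f :: "'a \<Rightarrow> real"
  assumes "\<And>x. x \<in> D \<Longrightarrow> f (al x) = - f x"
  shows "(\<Sum>x\<in>D. f x) = 0"
proof -
  have "(\<Sum>x\<in>D. f x) = (\<Sum>x\<in>D. f (al x))" by (rule sum.reindex_bij_betw[OF al_bij, symmetric])
  also have "\<dots> = - (\<Sum>x\<in>D. f x)" using assms by (simp add: sum_negf)
  finally show ?thesis by simp
qed

fun walk :: "'a set \<Rightarrow> 'a list \<Rightarrow> 'a set \<Rightarrow> bool" where
  "walk u [] v \<longleftrightarrow> u = v"
| "walk u (x # xs) v \<longleftrightarrow> x \<in> D \<and> orbit p x = u \<and> walk (orbit p (al x)) xs v"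

lemma walk_iff:
  "xs \<noteq> [] \<Longrightarrow> walk u xs v \<longleftrightarrow> set xs \<subseteq> D \<and> orbit p (hd xs) = u \<and> orbit p (al (last xs)) = v \<and>
     successively (\<lambda>x y. orbit p (al x) = orbit p y) xs"
proof (induction xs arbitrary: u)
  case (Cons x xs)
  then show ?case by (cases "xs = []") (auto simp: successively_Cons)
qed simp

lemma orbit_cycle_iff_walk:
  "orbit_cycle D al p xs \<longleftrightarrow> xs \<noteq> [] \<and> walk (orbit p (hd xs)) xs (orbit p (hd xs))"
proof (cases "xs = []")
  case False
  then show ?thesis
    unfolding orbit_cycle_def walk_iff[OF False] successively_conv_nth by (simp add: conj_ac)
qed (simp add: orbit_cycle_def)

lemma walk_subset: "walk u xs v \<Longrightarrow> set xs \<subseteq> D"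
  by (induction xs arbitrary: u) auto

lemma walk_append: "walk u xs v \<Longrightarrow> walk v ys z \<Longrightarrow> walk u (xs @ ys) z"
  by (induction xs arbitrary: u) auto

lemma walk_reverse: "walk u xs v \<Longrightarrow> walk v (rev (map al xs)) u"
proof (induction xs arbitrary: u)
  case (Cons x xs)
  then have "walk v (rev (map al xs)) (orbit p (al x))" by simp
  moreover have "walk (orbit p (al x)) [al x] u" using Cons.prems al_D al_al by simp
  ultimately show ?case using walk_append by simp
qed simp

lemma sum_coboundary_walk:
  "walk u xs v \<Longrightarrow> (\<Sum>x\<leftarrow>xs. h (orbit p (al x)) - h (orbit p x)) = h v - (h u :: real)"
  by (induction xs arbitrary: u) auto

lemma sum_coboundary_cycle:
  "orbit_cycle D al p xs \<Longrightarrow> (\<Sum>x\<leftarrow>xs. h (orbit p (al x)) - h (orbit p x)) = (0 :: real)"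
  using sum_coboundary_walk by (auto simp: orbit_cycle_iff_walk)

lemma sum_list_reverse_odd:
  fixes c :: "'a \<Rightarrow> real"
  assumes "set xs \<subseteq> D" and "\<And>x. x \<in> D \<Longrightarrow> c (al x) = - c x"
  shows "(\<Sum>x\<leftarrow>rev (map al xs). c x) = - (\<Sum>x\<leftarrow>xs. c x)"
  using assms by (induction xs) auto

lemma exact_if_periods_vanish:
  fixes c :: "'a \<Rightarrow> real"
  assumes odd: "\<And>x. x \<in> D \<Longrightarrow> c (al x) = - c x"
    and allowed_al: "\<And>x. x \<in> D \<Longrightarrow> allowed (al x) = allowed x"
    and periods: "\<And>xs. orbit_cycle D al p xs \<Longrightarrow> \<forall>x\<in>set xs. allowed x \<Longrightarrow> (\<Sum>x\<leftarrow>xs. c x) = 0"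
  shows "\<exists>h. \<forall>x\<in>D. allowed x \<longrightarrow> c x = h (orbit p (al x)) - h (orbit p x)"
proof -
  define reach where "reach u v \<longleftrightarrow> (\<exists>xs. walk u xs v \<and> (\<forall>x\<in>set xs. allowed x))" for u v
  have reach_refl: "reach u u" for u unfolding reach_def by (intro exI[of _ "[]"]) simp
  have reach_trans: "reach u v \<Longrightarrow> reach v z \<Longrightarrow> reach u z" for u v z
    unfolding reach_def using walk_append by (metis Un_iff set_append)
  \<comment> \<open>The potential of a vertex is the integral of c along a fixed path from a root of its component.\<close>
  define root where "root v = (SOME u. reach u v)" for v
  define path where "path v = (SOME xs. walk (root v) xs v \<and> (\<forall>x\<in>set xs. allowed x))" for v
  define h where "h v = (\<Sum>x\<leftarrow>path v. c x)" for v
  have "walk (root v) (path v) v \<and> (\<forall>x\<in>set (path v). allowed x)" for v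
  proof -
    have "reach (root v) v" unfolding root_def using reach_refl by (rule someI)
    then show ?thesis unfolding path_def reach_def by (rule someI_ex)
  qed
  then have path: "walk (root v) (path v) v" "\<forall>x\<in>set (path v). allowed x" for v by simp_all
  show ?thesis
  proof (intro exI ballI impI)
    fix x assume x: "x \<in> D" and allowed_x: "allowed x"
    define u u' where "u = orbit p x" and "u' = orbit p (al x)"
    have step: "walk u [x] u'" using x by (simp add: u_def u'_def)
    have step': "walk u' [al x] u" using x al_D al_al by (simp add: u_def u'_def)
    have "reach u u'" unfolding reach_def using step allowed_x by (intro exI[of _ "[x]"]) simp
    moreover have "reach u' u" unfolding reach_def using step' allowed_x allowed_al x by (intro exI[of _ "[al x]"]) simp
    ultimately have "reach a u \<longleftrightarrow> reach a u'" for a using reach_trans by blast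
    then have same_root: "root u = root u'" unfolding root_def by simp
    define ys where "ys = path u @ [x] @ rev (map al (path u'))"
    have ys_ne: "ys \<noteq> []" by (simp add: ys_def)
    have "walk (root u) ys (root u')"
      unfolding ys_def by (intro walk_append[OF path(1) walk_append[OF step walk_reverse[OF path(1)]]])
    then have walk_ys: "walk (root u) ys (root u)" by (simp add: same_root)
    then have "orbit p (hd ys) = root u" by (simp add: walk_iff[OF ys_ne])
    with walk_ys ys_ne have "orbit_cycle D al p ys" by (simp add: orbit_cycle_iff_walk)
    moreover have "\<forall>y\<in>set ys. allowed y"
    proof -
      have "allowed (al z)" if "z \<in> set (path u')" for z
        using that path(2)[of u'] allowed_al walk_subset[OF path(1)[of u']] by auto
      then show ?thesis using path(2)[of u] allowed_x by (auto simp: ys_def)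
    qed
    ultimately have "(\<Sum>y\<leftarrow>ys. c y) = 0" by (rule periods)
    moreover have "(\<Sum>y\<leftarrow>ys. c y) = h u + c x - h u'"
      using sum_list_reverse_odd[of "path u'" c, OF walk_subset[OF path(1)[of u']] odd] by (simp add: ys_def h_def)
    ultimately show "c x = h (orbit p (al x)) - h (orbit p x)" by (simp add: u_def u'_def)
  qed
qed

lemma green_formula:
  fixes c :: "'a \<Rightarrow> real"
  assumes odd: "\<And>x. x \<in> D \<Longrightarrow> c (al x) = - c x"
  shows "(\<Sum>x\<in>D. w x * c x * (h (orbit p (al x)) - h (orbit p x))) =
    - 2 * (\<Sum>v\<in>V. h v * (\<Sum>x\<in>v. w x * c x))"
proof -
  have "(\<Sum>x\<in>D. w x * c x * h (orbit p (al x))) = (\<Sum>x\<in>D. w (al x) * c (al x) * h (orbit p (al (al x))))"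
    by (rule sum.reindex_bij_betw[OF al_bij, symmetric])
  also have "\<dots> = - (\<Sum>x\<in>D. w x * c x * h (orbit p x))"
    by (simp add: w_al odd al_al sum_negf)
  finally have reflect: "(\<Sum>x\<in>D. w x * c x * h (orbit p (al x))) = - (\<Sum>x\<in>D. w x * c x * h (orbit p x))" .
  have "(\<Sum>x\<in>D. w x * c x * h (orbit p x)) = (\<Sum>v\<in>V. \<Sum>x\<in>v. w x * c x * h v)"
    by (rule sum_by_vertices)
  also have "\<dots> = (\<Sum>v\<in>V. h v * (\<Sum>x\<in>v. w x * c x))"
    by (intro sum.cong refl) (simp add: sum_distrib_left mult_ac)
  finally have "(\<Sum>x\<in>D. w x * c x * h (orbit p x)) = (\<Sum>v\<in>V. h v * (\<Sum>x\<in>v. w x * c x))" .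
  with reflect show ?thesis by (simp add: right_diff_distrib sum_subtractf)
qed

lemma coclosed_coboundary_eq_0:
  fixes c :: "'a \<Rightarrow> real"
  assumes odd: "\<And>x. x \<in> D \<Longrightarrow> c (al x) = - c x"
    and coclosed: "\<And>y. y \<in> D \<Longrightarrow> (\<Sum>x\<in>orbit p y. w x * c x) = 0"
    and exact: "\<And>x. x \<in> D \<Longrightarrow> c x = h (orbit p (al x)) - h (orbit p x)"
    and "x \<in> D"
  shows "c x = 0"
proof -
  have "(\<Sum>x\<in>D. w x * c x * c x) = (\<Sum>x\<in>D. w x * c x * (h (orbit p (al x)) - h (orbit p x)))"
    using exact by simp
  also have "\<dots> = - 2 * (\<Sum>v\<in>V. h v * (\<Sum>x\<in>v. w x * c x))"
    by (rule green_formula[of c h, OF odd])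
  also have "(\<Sum>v\<in>V. h v * (\<Sum>x\<in>v. w x * c x)) = 0"
    using coclosed by (auto simp: V_def intro!: sum.neutral)
  finally have energy: "(\<Sum>x\<in>D. w x * c x * c x) = 0" by simp
  have nonneg: "0 \<le> w x * c x * c x" if "x \<in> D" for x
    using w_pos[OF that] by (simp add: mult.assoc)
  have "\<forall>x\<in>D. w x * c x * c x = 0"
    using sum_nonneg_eq_0_iff[OF finite_D, of "\<lambda>x. w x * c x * c x"] energy nonneg by simp
  then have "w x * c x * c x = 0" using \<open>x \<in> D\<close> by (rule bspec)
  then show ?thesis using w_pos[OF \<open>x \<in> D\<close>] by simp
qed

lemma harmonic_eq_0_iff_periods_vanish:
  assumes "harmonic D al p q w c"
  shows "(\<forall>xs. orbit_cycle D al p xs \<longrightarrow> (\<Sum>x\<leftarrow>xs. c x) = 0) \<longleftrightarrow> (\<forall>x\<in>D. c x = 0)"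
proof
  have odd: "\<And>x. x \<in> D \<Longrightarrow> c (al x) = - c x"
    and coclosed: "\<And>y. y \<in> D \<Longrightarrow> (\<Sum>x\<in>orbit p y. w x * c x) = 0"
    using assms by (simp_all add: harmonic_def)
  assume periods: "\<forall>xs. orbit_cycle D al p xs \<longrightarrow> (\<Sum>x\<leftarrow>xs. c x) = 0"
  have periods': "\<And>xs. orbit_cycle D al p xs \<Longrightarrow> \<forall>x\<in>set xs. True \<Longrightarrow> (\<Sum>x\<leftarrow>xs. c x) = 0"
    using periods by blast
  have "\<exists>h. \<forall>x\<in>D. True \<longrightarrow> c x = h (orbit p (al x)) - h (orbit p x)"
    by (rule exact_if_periods_vanish[of c "\<lambda>_. True", OF odd refl periods'])
  then obtain h where h: "\<And>x. x \<in> D \<Longrightarrow> c x = h (orbit p (al x)) - h (orbit p x)" by blast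
  show "\<forall>x\<in>D. c x = 0"
    using coclosed_coboundary_eq_0[of c h, OF odd coclosed h] by blast
next
  assume c0: "\<forall>x\<in>D. c x = 0"
  show "\<forall>xs. orbit_cycle D al p xs \<longrightarrow> (\<Sum>x\<leftarrow>xs. c x) = 0"
  proof (intro allI impI)
    fix xs assume "orbit_cycle D al p xs"
    then have "set xs \<subseteq> D" by (simp add: orbit_cycle_def)
    then show "(\<Sum>x\<leftarrow>xs. c x) = 0" using c0 by (induction xs) auto
  qed
qed

lemma coboundary_closed:
  fixes h :: "'a set \<Rightarrow> real"
  assumes y: "y \<in> D"
  shows "(\<Sum>x\<in>orbit q y. h (orbit p (al x)) - h (orbit p x)) = 0"
proof -
  have sub: "orbit q y \<subseteq> D" by (rule orbit_q_subset[OF y])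
  have inj: "inj_on q (orbit q y)"
    using inj_on_subset[of q D "orbit q y"] q_bij sub by (simp add: bij_betw_def)
  have "(\<Sum>x\<in>orbit q y. h (orbit p (al x))) = (\<Sum>x\<in>orbit q y. h (orbit p (q x)))"
  proof (rule sum.cong[OF refl])
    fix x assume "x \<in> orbit q y"
    then have "x \<in> D" using sub by blast
    then show "h (orbit p (al x)) = h (orbit p (q x))" by (simp add: orbit_p_q)
  qed
  also have "\<dots> = (\<Sum>x\<in>q ` orbit q y. h (orbit p x))"
    by (simp add: sum.reindex[OF inj])
  also have "q ` orbit q y = orbit q y" by (rule image_orbit[OF finite_D q_bij y])
  finally show ?thesis by (simp add: sum_subtractf)
qed

definition laplacian :: "('a set \<Rightarrow> real) \<Rightarrow> 'a set \<Rightarrow> real" where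
  "laplacian h v = (\<Sum>x\<in>v. w x * (h (orbit p (al x)) - h v))"

lemma sum_laplacian: "(\<Sum>v\<in>V. laplacian h v) = 0"
proof -
  have "(\<Sum>v\<in>V. laplacian h v) = (\<Sum>x\<in>D. w x * (h (orbit p (al x)) - h (orbit p x)))"
    unfolding laplacian_def by (rule sum_by_vertices[symmetric])
  also have "\<dots> = 0" by (rule sum_odd_eq_0) (simp add: w_al al_al algebra_simps)
  finally show ?thesis .
qed

lemma coclosed_coboundary_iff_laplacian:
  "y \<in> D \<Longrightarrow> (\<Sum>x\<in>orbit p y. w x * (h (orbit p (al x)) - h (orbit p x))) = laplacian h (orbit p y)"
  unfolding laplacian_def using orbit_p_eq by (intro sum.cong) auto

lemma laplacian_eq_0_imp_constant:
  assumes zero: "\<forall>v\<in>V. laplacian h v = 0" and "x \<in> D" and "y \<in> D"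
  shows "h (orbit p x) = h (orbit p y)"
proof -
  have dh: "h (orbit p (al u)) = h (orbit p u)" if "u \<in> D" for u
    using coclosed_coboundary_eq_0[of "\<lambda>x. h (orbit p (al x)) - h (orbit p x)" h u] that zero
    by (simp add: al_al coclosed_coboundary_iff_laplacian V_def)
  from connected[OF \<open>x \<in> D\<close> \<open>y \<in> D\<close>] show ?thesis
  proof (induction rule: rtrancl_induct)
    case (step y z)
    then show ?case using dh orbit_apply[OF finite_D p_bij] by auto
  qed simp
qed

lemma laplacian_linear:
  assumes v: "v \<in> V"
  shows "laplacian h v =
    (\<Sum>u\<in>V. (\<Sum>x\<in>v. w x * ((if orbit p (al x) = u then 1 else 0) - (if u = v then 1 else 0))) * h u)"
proof -
  have al_V: "orbit p (al x) \<in> V" if "x \<in> v" for x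
    using v that orbit_p_subset al_D by (auto simp: V_def)
  have "(\<Sum>u\<in>V. (\<Sum>x\<in>v. w x * ((if orbit p (al x) = u then 1 else 0) - (if u = v then 1 else 0))) * h u)
      = (\<Sum>u\<in>V. \<Sum>x\<in>v. w x * ((if orbit p (al x) = u then h u else 0) - (if u = v then h u else 0)))"
    unfolding sum_distrib_right by (intro sum.cong refl) (simp add: algebra_simps)
  also have "\<dots> = (\<Sum>x\<in>v. \<Sum>u\<in>V. w x * ((if orbit p (al x) = u then h u else 0) - (if u = v then h u else 0)))"
    by (rule sum.swap)
  also have "\<dots> = (\<Sum>x\<in>v. w x * ((\<Sum>u\<in>V. if orbit p (al x) = u then h u else 0) - (\<Sum>u\<in>V. if u = v then h u else 0)))"
    by (intro sum.cong refl) (simp add: sum_subtractf sum_distrib_left right_diff_distrib)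
  also have "\<dots> = laplacian h v"
    unfolding laplacian_def using al_V v finite_V by (intro sum.cong refl) (simp add: sum.delta sum.delta')
  finally show ?thesis by simp
qed

lemma poisson_solvable:
  assumes "(\<Sum>v\<in>V. g v) = 0"
  shows "\<exists>h. \<forall>v\<in>V. laplacian h v = g v"
proof -
  have card_V: "card V > 0" using finite_V D_ne by (auto simp: V_def card_gt_0_iff)
  \<comment> \<open>The kernel of the laplacian consists of the constants; adding \<open>\<Sum>u\<in>V. h u\<close> makes it injective.\<close>
  define a where
    "a v u = (\<Sum>x\<in>v. w x * ((if orbit p (al x) = u then 1 else 0) - (if u = v then 1 else 0))) + 1"
    for v u :: "'a set"
  have a: "(\<Sum>u\<in>V. a v u * h u) = laplacian h v + (\<Sum>u\<in>V. h u)" if "v \<in> V" for v h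
    unfolding a_def laplacian_linear[OF that] by (simp add: distrib_right sum.distrib)
  have sum_eq_0: "(\<Sum>u\<in>V. h u) = 0" if "\<forall>v\<in>V. laplacian h v + (\<Sum>u\<in>V. h u) = g' v"
    and "(\<Sum>v\<in>V. g' v) = 0" for h g'
  proof -
    have "(\<Sum>v\<in>V. laplacian h v + (\<Sum>u\<in>V. h u)) = 0" using that by simp
    then show ?thesis using sum_laplacian card_V by (simp add: sum.distrib)
  qed
  have "\<forall>v\<in>V. h v = 0" if "\<forall>v\<in>V. (\<Sum>u\<in>V. a v u * h u) = 0" for h
  proof
    fix v assume v: "v \<in> V"
    have S: "(\<Sum>u\<in>V. h u) = 0" using sum_eq_0[of h "\<lambda>_. 0"] that a by simp
    then have "\<forall>v\<in>V. laplacian h v = 0" using that a by simp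
    then have "h u = h v" if "u \<in> V" for u
      using laplacian_eq_0_imp_constant that v by (auto simp: V_def)
    then have "real (card V) * h v = 0" using S by simp
    then show "h v = 0" using card_V by simp
  qed
  then obtain h where "\<forall>v\<in>V. (\<Sum>u\<in>V. a v u * h u) = g v"
    using injective_linear_system_solvable[OF finite_V] by blast
  moreover from this have "(\<Sum>u\<in>V. h u) = 0" using sum_eq_0 a assms by simp
  ultimately show ?thesis using a by auto
qed

end

section \<open>Harmonic forms dual to a simple cycle\<close>

lemma bij_betw_Suc_mod: "0 < n \<Longrightarrow> bij_betw (\<lambda>i. Suc i mod n) {..<n} {..<n}"
proof -
  assume n: "0 < n"
  have "inj_on (\<lambda>i. Suc i mod n) {..<n}"
    by (rule inj_onI) (auto simp: mod_Suc split: if_splits)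
  moreover have "(\<lambda>i. Suc i mod n) ` {..<n} \<subseteq> {..<n}" using n by auto
  ultimately show ?thesis
    by (simp add: bij_betw_def endo_inj_surj)
qed

definition crosses :: "('a \<Rightarrow> 'a) \<Rightarrow> 'a list \<Rightarrow> 'a \<Rightarrow> bool" where
  "crosses al A x \<longleftrightarrow> x \<in> set A \<or> al x \<in> set A"

definition distinct_edges :: "('a \<Rightarrow> 'a) \<Rightarrow> 'a list \<Rightarrow> bool" where
  "distinct_edges al xs \<longleftrightarrow> (\<forall>i j. i < length xs \<longrightarrow> j < length xs \<longrightarrow> i \<noteq> j \<longrightarrow>
     xs ! i \<noteq> xs ! j \<and> xs ! i \<noteq> al (xs ! j))"

locale crossing_cycles = weighted_map +
  fixes A B
  assumes A_cycle: "orbit_cycle D al q A"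
    and A_simple: "distinct (map (orbit q) A)"
    and A_edges: "distinct_edges al A"
    and B_cycle: "orbit_cycle D al p B"
    and B_edges: "distinct_edges al B"
    and cross_once: "card {i. i < length A \<and> crosses al B (A ! i)} = 1"
begin

lemma length_A_pos: "0 < length A"
  using A_cycle by (simp add: orbit_cycle_def)

lemma nth_A_in_D: "i < length A \<Longrightarrow> A ! i \<in> D"
  using A_cycle by (auto simp: orbit_cycle_def)

lemma nth_B_in_D: "j < length B \<Longrightarrow> B ! j \<in> D"
  using B_cycle by (auto simp: orbit_cycle_def)

lemma al_notin_A: "x \<in> set A \<Longrightarrow> al x \<notin> set A"
proof
  assume "x \<in> set A" "al x \<in> set A"
  then obtain i j where i: "i < length A" "x = A ! i" and j: "j < length A" "al x = A ! j"
    by (auto simp: in_set_conv_nth)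
  show False
  proof (cases "i = j")
    case True
    then show False using i j al_ne nth_A_in_D by metis
  next
    case False
    then show False using A_edges i j unfolding distinct_edges_def by metis
  qed
qed

lemma orbit_q_al_A:
  assumes "i < length A"
  shows "orbit q (al (A ! i)) = orbit q (A ! (Suc i mod length A))"
proof (cases "Suc i = length A")
  case True
  moreover have "A \<noteq> []" using assms by auto
  ultimately have "last A = A ! i" "hd A = A ! 0" by (simp_all add: last_conv_nth hd_conv_nth flip: True)
  then show ?thesis using A_cycle True by (simp add: orbit_cycle_def)
next
  case False
  then show ?thesis using A_cycle assms by (simp add: orbit_cycle_def)
qed

lemma orbit_q_A_inj:
  "i < length A \<Longrightarrow> j < length A \<Longrightarrow> orbit q (A ! i) = orbit q (A ! j) \<Longrightarrow> i = j"
  using A_simple by (auto simp: distinct_conv_nth)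

lemma crossing_darts_at_A:
  assumes j: "j < length A"
  defines "a \<equiv> A ! (Suc j mod length A)"
  shows "{x \<in> orbit q a. crosses al A x} = {a, al (A ! j)}"
proof -
  have j': "Suc j mod length A < length A" using length_A_pos by simp
  have a: "a \<in> D" "a \<in> set A" unfolding a_def using nth_A_in_D[OF j'] j' by simp_all
  have "x \<in> {a, al (A ! j)}" if x: "x \<in> orbit q a" "x \<in> set A \<or> al x \<in> set A" for x
  proof -
    have xD: "x \<in> D" using x(1) orbit_q_subset[OF a(1)] by blast
    have ox: "orbit q x = orbit q a" using mem_orbit_q_iff[OF a(1) xD] x(1) by simp
    from x(2) show ?thesis
    proof
      assume "x \<in> set A"
      then obtain i where "i < length A" "x = A ! i" by (auto simp: in_set_conv_nth)
      then show ?thesis using orbit_q_A_inj[OF _ j'] ox unfolding a_def by auto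
    next
      assume "al x \<in> set A"
      then obtain i where i: "i < length A" "al x = A ! i" by (auto simp: in_set_conv_nth)
      then have x_eq: "x = al (A ! i)" using al_al[OF xD] by simp
      have "Suc i mod length A = Suc j mod length A"
        using orbit_q_A_inj[of "Suc i mod length A" "Suc j mod length A"] orbit_q_al_A[OF i(1)] ox
          length_A_pos j' x_eq unfolding a_def by simp
      then have "i = j"
        using bij_betw_Suc_mod[OF length_A_pos] i(1) j by (auto simp: bij_betw_def inj_on_def)
      then show ?thesis using x_eq by simp
    qed
  qed
  moreover have "al (A ! j) \<in> orbit q a"
    using mem_orbit_q_iff[OF a(1) al_D[OF nth_A_in_D[OF j]]] orbit_q_al_A[OF j] unfolding a_def by simp
  moreover have "crosses al A (al (A ! j))" using al_al nth_A_in_D[OF j] j by (simp add: crosses_def)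
  moreover have "crosses al A a" using a by (simp add: crosses_def)
  ultimately show ?thesis using orbit_self[of a q] by (auto simp: crosses_def)
qed

lemma sum_orbit_at_A:
  assumes j: "j < length A" and supp: "\<And>x. x \<in> D \<Longrightarrow> \<not> crosses al A x \<Longrightarrow> k x = 0"
  shows "(\<Sum>x\<in>orbit q (A ! (Suc j mod length A)). k x) = k (A ! (Suc j mod length A)) + k (al (A ! j))"
proof -
  define a where "a = A ! (Suc j mod length A)"
  have aD: "a \<in> D" and aA: "a \<in> set A"
    unfolding a_def using nth_A_in_D length_A_pos by simp_all
  have fin: "finite (orbit q a)" using orbit_q_subset[OF aD] finite_D by (rule finite_subset)
  have ne: "a \<noteq> al (A ! j)" using al_notin_A[OF nth_mem[OF j]] aA by auto
  have "(\<Sum>x\<in>orbit q a. k x) = (\<Sum>x\<in>{x \<in> orbit q a. crosses al A x}. k x)"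
    using orbit_q_subset[OF aD] supp by (intro sum.mono_neutral_right fin) auto
  also have "{x \<in> orbit q a. crosses al A x} = {a, al (A ! j)}"
    unfolding a_def by (rule crossing_darts_at_A[OF j])
  also have "(\<Sum>x\<in>{a, al (A ! j)}. k x) = k a + k (al (A ! j))" using ne by simp
  finally show ?thesis unfolding a_def .
qed

lemma orbit_q_crossing:
  assumes y: "y \<in> D" and x: "x \<in> orbit q y" and cx: "crosses al A x"
  obtains j where "j < length A" and "orbit q y = orbit q (A ! (Suc j mod length A))"
proof -
  have xD: "x \<in> D" using x orbit_q_subset[OF y] by blast
  have oy: "orbit q y = orbit q x" using mem_orbit_q_iff[OF y xD] x by simp
  have bij: "bij_betw (\<lambda>i. Suc i mod length A) {..<length A} {..<length A}"
    by (rule bij_betw_Suc_mod[OF length_A_pos])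
  from cx consider "x \<in> set A" | "al x \<in> set A" unfolding crosses_def by blast
  then show ?thesis
  proof cases
    case 1
    then obtain i where i: "i < length A" "x = A ! i" by (auto simp: in_set_conv_nth)
    have "i \<in> (\<lambda>j. Suc j mod length A) ` {..<length A}" using bij i(1) by (simp add: bij_betw_def)
    then obtain j where "j < length A" "i = Suc j mod length A" by auto
    then show ?thesis using that oy i by simp
  next
    case 2
    then obtain i where i: "i < length A" "al x = A ! i" by (auto simp: in_set_conv_nth)
    then have "al (al x) = al (A ! i)" by simp
    then have "orbit q y = orbit q (al (A ! i))" using oy al_al[OF xD] by simp
    then show ?thesis using that i(1) orbit_q_al_A[OF i(1)] by simp
  qed
qed

definition signed_crossing :: "'a \<Rightarrow> real" where
  "signed_crossing x = of_bool (x \<in> set A) - of_bool (al x \<in> set A)"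

lemma signed_crossing_odd: "x \<in> D \<Longrightarrow> signed_crossing (al x) = - signed_crossing x"
  by (simp add: signed_crossing_def al_al)

lemma signed_crossing_eq_0: "\<not> crosses al A x \<Longrightarrow> signed_crossing x = 0"
  by (simp add: signed_crossing_def crosses_def)

lemma signed_crossing_neq_0: "crosses al A x \<Longrightarrow> signed_crossing x \<noteq> 0"
  using al_notin_A by (auto simp: signed_crossing_def crosses_def)

lemma signed_crossing_closed:
  assumes y: "y \<in> D"
  shows "(\<Sum>x\<in>orbit q y. signed_crossing x) = 0"
proof (cases "\<exists>x\<in>orbit q y. crosses al A x")
  case True
  then obtain j where j: "j < length A" and oy: "orbit q y = orbit q (A ! (Suc j mod length A))"
    using orbit_q_crossing[OF y] by blast
  have "A ! (Suc j mod length A) \<in> set A" using length_A_pos by simp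
  moreover have "al (A ! j) \<notin> set A" using al_notin_A j by simp
  moreover have "al (al (A ! j)) \<in> set A" using al_al nth_A_in_D[OF j] j by simp
  ultimately show ?thesis
    unfolding oy using sum_orbit_at_A[OF j, of signed_crossing] signed_crossing_eq_0
    al_notin_A by (simp add: signed_crossing_def)
next
  case False
  then show ?thesis using signed_crossing_eq_0 by simp
qed

lemma closed_form_supported_on_A:
  fixes k :: "'a \<Rightarrow> real"
  assumes odd: "\<And>x. x \<in> D \<Longrightarrow> k (al x) = - k x"
    and supp: "\<And>x. x \<in> D \<Longrightarrow> \<not> crosses al A x \<Longrightarrow> k x = 0"
    and closed: "\<And>y. y \<in> D \<Longrightarrow> (\<Sum>x\<in>orbit q y. k x) = 0"
    and x: "x \<in> D"
  shows "k x = k (A ! 0) * signed_crossing x"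
proof -
  \<comment> \<open>Closedness at the vertex where A passes from \<open>A ! j\<close> to its successor carries k along A.\<close>
  have step: "k (A ! (Suc j mod length A)) = k (A ! j)" if j: "j < length A" for j
  proof -
    have "Suc j mod length A < length A" using length_A_pos by simp
    then have "0 = k (A ! (Suc j mod length A)) + k (al (A ! j))"
      using closed[OF nth_A_in_D] sum_orbit_at_A[of j k, OF j supp] by simp
    then show ?thesis using odd[OF nth_A_in_D[OF j]] by simp
  qed
  have along_A: "k (A ! j) = k (A ! 0)" if "j < length A" for j
    using that
  proof (induction j)
    case (Suc j)
    then show ?case using step[of j] by simp
  qed simp
  show ?thesis
  proof (cases "x \<in> set A")
    case True
    then show ?thesis
      using along_A al_notin_A by (auto simp: signed_crossing_def in_set_conv_nth)
  next
    case False
    show ?thesis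
    proof (cases "al x \<in> set A")
      case True
      then obtain j where "j < length A" "al x = A ! j" by (auto simp: in_set_conv_nth)
      then show ?thesis using False True along_A odd[OF x] by (simp add: signed_crossing_def)
    next
      case False': False
      then show ?thesis using False supp[OF x] by (simp add: signed_crossing_def crosses_def)
    qed
  qed
qed

lemma B_crosses_A_once:
  "\<exists>x0\<in>set B. crosses al A x0 \<and>
     (\<forall>f :: 'a \<Rightarrow> real. (\<forall>x\<in>D. \<not> crosses al A x \<longrightarrow> f x = 0) \<longrightarrow> (\<Sum>x\<leftarrow>B. f x) = f x0)"
proof -
  obtain i0 where I: "{i. i < length A \<and> crosses al B (A ! i)} = {i0}"
    using cross_once by (auto simp: card_Suc_eq)
  have i0: "i0 < length A" "crosses al B (A ! i0)" using I by auto
  then obtain j0 where j0: "j0 < length B" "B ! j0 = A ! i0 \<or> B ! j0 = al (A ! i0)"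
    unfolding crosses_def by (metis al_al nth_A_in_D in_set_conv_nth)
  have at_i0: "B ! j = A ! i0 \<or> B ! j = al (A ! i0)" if j: "j < length B" "crosses al A (B ! j)" for j
  proof -
    obtain i where i: "i < length A" "B ! j = A ! i \<or> al (B ! j) = A ! i"
      using j(2) unfolding crosses_def by (auto simp: in_set_conv_nth)
    then have Bj: "B ! j = A ! i \<or> B ! j = al (A ! i)" using al_al[OF nth_B_in_D[OF j(1)]] by metis
    then have "crosses al B (A ! i)"
      using al_al[OF nth_A_in_D[OF i(1)]] nth_mem[OF j(1)] unfolding crosses_def by metis
    then have "i = i0" using I i(1) by blast
    then show ?thesis using Bj by simp
  qed
  have crosses_j0: "crosses al A (B ! j0)"
    using j0(2) al_al[OF nth_A_in_D[OF i0(1)]] nth_mem[OF i0(1)] unfolding crosses_def by metis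
  have only_j0: "\<not> crosses al A (B ! j)" if j: "j < length B" "j \<noteq> j0" for j
  proof
    assume "crosses al A (B ! j)"
    then have "B ! j = A ! i0 \<or> B ! j = al (A ! i0)" by (rule at_i0[OF j(1)])
    moreover have "B ! j \<noteq> B ! j0" "B ! j \<noteq> al (B ! j0)"
      using B_edges j j0(1) unfolding distinct_edges_def by blast+
    ultimately show False using j0(2) al_al[OF nth_A_in_D[OF i0(1)]] by metis
  qed
  show ?thesis
  proof (intro bexI conjI allI impI)
    fix f :: "'a \<Rightarrow> real" assume f: "\<forall>x\<in>D. \<not> crosses al A x \<longrightarrow> f x = 0"
    have "(\<Sum>x\<leftarrow>B. f x) = (\<Sum>j<length B. f (B ! j))"
      by (simp add: sum_list_sum_nth atLeast0LessThan)
    also have "\<dots> = (\<Sum>j<length B. if j = j0 then f (B ! j0) else 0)"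
      using f only_j0 nth_B_in_D by (intro sum.cong) auto
    also have "\<dots> = f (B ! j0)" using j0(1) by simp
    finally show "(\<Sum>x\<leftarrow>B. f x) = f (B ! j0)" .
  qed (use j0(1) crosses_j0 in simp_all)
qed

definition periods_normalized :: "('a \<Rightarrow> real) \<Rightarrow> bool" where
  "periods_normalized c \<longleftrightarrow>
     (\<forall>xs. orbit_cycle D al p xs \<and> (\<forall>x\<in>set xs. \<not> crosses al A x) \<longrightarrow> (\<Sum>x\<leftarrow>xs. c x) = 0) \<and>
     (\<Sum>x\<leftarrow>B. c x) = 1"

lemma harmonic_eq_0_if_periods_vanish_off_A:
  assumes harm: "harmonic D al p q w c"
    and periods: "\<And>xs. orbit_cycle D al p xs \<Longrightarrow> \<forall>x\<in>set xs. \<not> crosses al A x \<Longrightarrow> (\<Sum>x\<leftarrow>xs. c x) = 0"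
    and period_B: "(\<Sum>x\<leftarrow>B. c x) = 0"
    and x: "x \<in> D"
  shows "c x = 0"
proof -
  have odd: "\<And>x. x \<in> D \<Longrightarrow> c (al x) = - c x"
    and closed: "\<And>y. y \<in> D \<Longrightarrow> (\<Sum>x\<in>orbit q y. c x) = 0"
    and coclosed: "\<And>y. y \<in> D \<Longrightarrow> (\<Sum>x\<in>orbit p y. w x * c x) = 0"
    using harm by (simp_all add: harmonic_def)
  have crosses_al: "(\<not> crosses al A (al x)) = (\<not> crosses al A x)" if "x \<in> D" for x
    using al_al[OF that] by (auto simp: crosses_def)
  obtain h where h: "\<forall>x\<in>D. \<not> crosses al A x \<longrightarrow> c x = h (orbit p (al x)) - h (orbit p x)"
    using exact_if_periods_vanish[of c "\<lambda>x. \<not> crosses al A x", OF odd crosses_al periods] by blast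
  \<comment> \<open>The part of c not accounted for by the potential h lives on the darts crossing A.\<close>
  define k where "k x = c x - (h (orbit p (al x)) - h (orbit p x))" for x
  have k_odd: "\<And>x. x \<in> D \<Longrightarrow> k (al x) = - k x" using odd by (simp add: k_def al_al)
  have k_supp: "\<And>x. x \<in> D \<Longrightarrow> \<not> crosses al A x \<Longrightarrow> k x = 0" using h by (simp add: k_def)
  have k_closed: "\<And>y. y \<in> D \<Longrightarrow> (\<Sum>x\<in>orbit q y. k x) = 0"
    using closed coboundary_closed by (simp add: k_def sum_subtractf)
  obtain x0 where x0: "x0 \<in> set B" "crosses al A x0"
    and sum_B: "\<And>f :: 'a \<Rightarrow> real. \<forall>x\<in>D. \<not> crosses al A x \<longrightarrow> f x = 0 \<Longrightarrow> (\<Sum>x\<leftarrow>B. f x) = f x0"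
    using B_crosses_A_once by blast
  have x0D: "x0 \<in> D" using x0(1) B_cycle by (auto simp: orbit_cycle_def)
  have "(\<Sum>x\<leftarrow>B. c x) = (\<Sum>x\<leftarrow>B. h (orbit p (al x)) - h (orbit p x)) + (\<Sum>x\<leftarrow>B. k x)"
    by (simp add: k_def flip: sum_list_addf)
  also have "(\<Sum>x\<leftarrow>B. h (orbit p (al x)) - h (orbit p x)) = 0"
    by (rule sum_coboundary_cycle[OF B_cycle])
  also have "(\<Sum>x\<leftarrow>B. k x) = k x0" using k_supp by (intro sum_B) blast
  finally have "k x0 = 0" using period_B by simp
  then have "k (A ! 0) = 0"
    using closed_form_supported_on_A[of k, OF k_odd k_supp k_closed x0D] signed_crossing_neq_0[OF x0(2)]
    by simp
  then have "k y = 0" if "y \<in> D" for y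
    using closed_form_supported_on_A[of k, OF k_odd k_supp k_closed that] by simp
  then have exact: "c y = h (orbit p (al y)) - h (orbit p y)" if "y \<in> D" for y
    using that by (simp add: k_def)
  show ?thesis by (rule coclosed_coboundary_eq_0[of c h, OF odd coclosed exact x])
qed

lemma harmonic_periods_normalized_unique:
  assumes "harmonic D al p q w c" "periods_normalized c"
    and "harmonic D al p q w c'" "periods_normalized c'"
    and "x \<in> D"
  shows "c x = c' x"
proof -
  have "(\<lambda>x. c x - c' x) x = 0"
  proof (rule harmonic_eq_0_if_periods_vanish_off_A)
    show "harmonic D al p q w (\<lambda>x. c x - c' x)" using assms(1,3) by (rule harmonic_diff)
    show "(\<Sum>x\<leftarrow>xs. c x - c' x) = 0"
      if "orbit_cycle D al p xs" "\<forall>x\<in>set xs. \<not> crosses al A x" for xs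
      using assms(2,4) that by (simp add: periods_normalized_def sum_list_subtractf)
    show "(\<Sum>x\<leftarrow>B. c x - c' x) = 0"
      using assms(2,4) by (simp add: periods_normalized_def sum_list_subtractf)
  qed (rule assms(5))
  then show ?thesis by simp
qed

lemma harmonic_signed_crossing_plus_coboundary:
  assumes h: "\<And>v. v \<in> V \<Longrightarrow> laplacian h v = - (\<Sum>x\<in>v. w x * signed_crossing x)"
  shows "harmonic D al p q w (\<lambda>x. signed_crossing x + (h (orbit p (al x)) - h (orbit p x)))"
  unfolding harmonic_def
proof (intro conjI ballI)
  fix x assume "x \<in> D"
  then show "signed_crossing (al x) + (h (orbit p (al (al x))) - h (orbit p (al x))) =
      - (signed_crossing x + (h (orbit p (al x)) - h (orbit p x)))"
    by (simp add: signed_crossing_odd al_al)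
next
  fix y assume y: "y \<in> D"
  show "(\<Sum>x\<in>orbit q y. signed_crossing x + (h (orbit p (al x)) - h (orbit p x))) = 0"
    using signed_crossing_closed[OF y] coboundary_closed[OF y] by (simp add: sum.distrib)
  have "(\<Sum>x\<in>orbit p y. w x * (signed_crossing x + (h (orbit p (al x)) - h (orbit p x)))) =
      (\<Sum>x\<in>orbit p y. w x * signed_crossing x) + (\<Sum>x\<in>orbit p y. w x * (h (orbit p (al x)) - h (orbit p x)))"
    by (simp add: distrib_left sum.distrib)
  also have "\<dots> = 0"
    using h[of "orbit p y"] y by (simp add: coclosed_coboundary_iff_laplacian V_def)
  finally show "(\<Sum>x\<in>orbit p y. w x * (signed_crossing x + (h (orbit p (al x)) - h (orbit p x)))) = 0" .
qed

lemma harmonic_periods_normalized_exists: "\<exists>c. harmonic D al p q w c \<and> periods_normalized c"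
proof -
  have "(\<Sum>v\<in>V. \<Sum>x\<in>v. w x * signed_crossing x) = (\<Sum>x\<in>D. w x * signed_crossing x)"
    by (rule sum_by_vertices[symmetric])
  also have "\<dots> = 0" by (rule sum_odd_eq_0) (simp add: w_al signed_crossing_odd)
  finally have "(\<Sum>v\<in>V. - (\<Sum>x\<in>v. w x * signed_crossing x)) = 0" by (simp add: sum_negf)
  then obtain h where h: "\<forall>v\<in>V. laplacian h v = - (\<Sum>x\<in>v. w x * signed_crossing x)"
    using poisson_solvable by blast
  \<comment> \<open>The signed crossing form corrected by a coboundary to make it coclosed; it remains to rescale.\<close>
  define c0 where "c0 x = signed_crossing x + (h (orbit p (al x)) - h (orbit p x))" for x
  have harm0: "harmonic D al p q w c0"
    unfolding c0_def by (rule harmonic_signed_crossing_plus_coboundary) (use h in blast)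
  have periods0: "(\<Sum>x\<leftarrow>xs. c0 x) = 0"
    if xs: "orbit_cycle D al p xs" "\<forall>x\<in>set xs. \<not> crosses al A x" for xs
  proof -
    have "(\<Sum>x\<leftarrow>xs. signed_crossing x) = (\<Sum>x\<leftarrow>xs. 0)"
      using xs(2) signed_crossing_eq_0 by (intro arg_cong[of _ _ sum_list] map_cong) auto
    then show ?thesis using sum_coboundary_cycle[OF xs(1)] by (simp add: c0_def sum_list_addf)
  qed
  obtain x0 where x0: "x0 \<in> set B" "crosses al A x0"
    and sum_B: "\<And>f :: 'a \<Rightarrow> real. \<forall>x\<in>D. \<not> crosses al A x \<longrightarrow> f x = 0 \<Longrightarrow> (\<Sum>x\<leftarrow>B. f x) = f x0"
    using B_crosses_A_once by blast
  define e where "e = signed_crossing x0"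
  have e: "e \<noteq> 0" unfolding e_def by (rule signed_crossing_neq_0[OF x0(2)])
  have "(\<Sum>x\<leftarrow>B. signed_crossing x) = e"
    unfolding e_def using signed_crossing_eq_0 by (intro sum_B) blast
  then have period_B: "(\<Sum>x\<leftarrow>B. c0 x) = e"
    using sum_coboundary_cycle[OF B_cycle] by (simp add: c0_def sum_list_addf)
  show ?thesis
  proof (intro exI conjI)
    show "harmonic D al p q w (\<lambda>x. 1 / e * c0 x)" using harm0 by (rule harmonic_scale)
    show "periods_normalized (\<lambda>x. 1 / e * c0 x)"
      unfolding periods_normalized_def sum_list_const_mult using periods0 period_B e by simp
  qed
qed

end

section \<open>Holomorphic forms on the double \<open>\<Lambda>\<close>\<close>

lemma lhead_simps [simp]:
  "lhead al sg (Prim x) = (True, orbit sg (al x))"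
  "lhead al sg (Dua x) = (False, orbit (sg \<circ> al) (al x))"
  by (simp_all add: lhead_def)

lemma ledges_simps [simp]:
  "Prim x \<in> ledges D \<longleftrightarrow> x \<in> D"
  "Dua x \<in> ledges D \<longleftrightarrow> x \<in> D"
  by (auto simp: ledges_def)

lemma is_loop_map_Prim: "is_loop D al sg (map Prim xs) \<longleftrightarrow> orbit_cycle D al sg xs"
proof -
  have "set (map Prim xs) \<subseteq> ledges D \<longleftrightarrow> set xs \<subseteq> D" by auto
  then show ?thesis by (cases "xs = []") (simp_all add: is_loop_def orbit_cycle_def last_map hd_map)
qed

lemma is_loop_map_Dua: "is_loop D al sg (map Dua xs) \<longleftrightarrow> orbit_cycle D al (sg \<circ> al) xs"
proof -
  have "set (map Dua xs) \<subseteq> ledges D \<longleftrightarrow> set xs \<subseteq> D" by auto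
  then show ?thesis by (cases "xs = []") (simp_all add: is_loop_def orbit_cycle_def last_map hd_map)
qed

lemma is_loop_cases:
  assumes "is_loop D al sg \<gamma>"
  obtains (primal) xs where "\<gamma> = map Prim xs" | (dual) xs where "\<gamma> = map Dua xs"
proof -
  \<comment> \<open>Edges of \<open>\<Lambda>\<close> join vertices of the same kind, so a loop stays on one side.\<close>
  have tag: "fst (lhead al sg e) = fst (ltail al sg e)" for e by (cases e) simp_all
  have same: "fst (ltail al sg (\<gamma> ! i)) = fst (ltail al sg (\<gamma> ! 0))" if "i < length \<gamma>" for i
    using that
  proof (induction i)
    case (Suc i)
    then have "lhead al sg (\<gamma> ! i) = ltail al sg (\<gamma> ! Suc i)" using assms by (simp add: is_loop_def)
    then show ?case using Suc tag[of "\<gamma> ! i"] by simp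
  qed simp
  show ?thesis
  proof (cases "fst (ltail al sg (\<gamma> ! 0))")
    case True
    have "\<forall>e\<in>set \<gamma>. \<exists>x. e = Prim x"
    proof
      fix e assume "e \<in> set \<gamma>"
      then obtain i where i: "i < length \<gamma>" "e = \<gamma> ! i" by (auto simp: in_set_conv_nth)
      then show "\<exists>x. e = Prim x" using same[OF i(1)] True by (cases "\<gamma> ! i") auto
    qed
    then show ?thesis using primal by (auto simp: ex_map_conv[symmetric])
  next
    case False
    have "\<forall>e\<in>set \<gamma>. \<exists>x. e = Dua x"
    proof
      fix e assume "e \<in> set \<gamma>"
      then obtain i where i: "i < length \<gamma>" "e = \<gamma> ! i" by (auto simp: in_set_conv_nth)
      then show "\<exists>x. e = Dua x" using same[OF i(1)] False by (cases "\<gamma> ! i") auto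
    qed
    then show ?thesis using dual by (auto simp: ex_map_conv[symmetric])
  qed
qed

lemma simple_loop_map_Prim:
  "simple_loop D al sg (map Prim xs) \<longleftrightarrow>
    orbit_cycle D al sg xs \<and> distinct (map (orbit sg) xs) \<and> distinct_edges al xs"
proof -
  have "map (ltail al sg) (map Prim xs) = map (Pair True) (map (orbit sg) xs)" by simp
  then have "distinct (map (ltail al sg) (map Prim xs)) \<longleftrightarrow> distinct (map (orbit sg) xs)"
    by (simp only: distinct_map) (simp add: inj_on_def)
  then show ?thesis by (simp add: simple_loop_def is_loop_map_Prim distinct_edges_def)
qed

lemma simple_loop_map_Dua:
  "simple_loop D al sg (map Dua xs) \<longleftrightarrow>
    orbit_cycle D al (sg \<circ> al) xs \<and> distinct (map (orbit (sg \<circ> al)) xs) \<and> distinct_edges al xs"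
proof -
  have "map (ltail al sg) (map Dua xs) = map (Pair False) (map (orbit (sg \<circ> al)) xs)" by simp
  then have "distinct (map (ltail al sg) (map Dua xs)) \<longleftrightarrow> distinct (map (orbit (sg \<circ> al)) xs)"
    by (simp only: distinct_map) (simp add: inj_on_def)
  then show ?thesis by (simp add: simple_loop_def is_loop_map_Dua distinct_edges_def)
qed

lemma dual_edges_same_side [simp]:
  "\<not> dual_edges al (Prim x) (Prim y)" "\<not> dual_edges al (Dua x) (Dua y)"
  by (simp_all add: dual_edges_def)

lemma ex_dual_edge_Prim_iff:
  assumes "\<And>d. d \<in> D \<Longrightarrow> al (al d) = d" and "x \<in> D" and "set ys \<subseteq> D"
  shows "(\<exists>f\<in>set (map Dua ys). dual_edges al (Prim x) f) \<longleftrightarrow> crosses al ys x"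
proof -
  have "dual_edges al (Prim x) (Dua y) \<longleftrightarrow> y = x \<or> y = al x" if "y \<in> set ys" for y
    using assms(1)[of y] assms(1)[of x] assms(2,3) that by (auto simp: dual_edges_def)
  then show ?thesis by (auto simp: crosses_def)
qed

lemma ex_dual_edge_Dua_iff:
  assumes "\<And>d. d \<in> D \<Longrightarrow> al (al d) = d" and "x \<in> D" and "set ys \<subseteq> D"
  shows "(\<exists>f\<in>set (map Prim ys). dual_edges al (Dua x) f) \<longleftrightarrow> crosses al ys x"
proof -
  have "dual_edges al (Dua x) (Prim y) \<longleftrightarrow> al x = y \<or> x = y" if "y \<in> set ys" for y
  proof -
    have "al x = al y \<longleftrightarrow> x = y"
    proof
      assume "al x = al y"
      then have "al (al x) = al (al y)" by simp
      then show "x = y" using assms(1)[of x] assms(1)[of y] assms(2,3) that by auto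
    qed simp
    then show ?thesis by (simp add: dual_edges_def)
  qed
  then show ?thesis by (auto simp: crosses_def)
qed

lemma weighted_map_primal:
  assumes "comb_map D al sg" and "conformal_structure D al \<rho>"
  shows "weighted_map D al sg (sg \<circ> al) (\<rho> \<circ> Prim)"
proof
  show "finite D" "D \<noteq> {}" "bij_betw sg D D" using assms(1) by (simp_all add: comb_map_def)
  show "al x \<in> D" "al (al x) = x" "al x \<noteq> x" if "x \<in> D" for x
    using assms(1) that by (auto simp: comb_map_def bij_betw_def)
  show "(sg \<circ> al) x = sg (al x)" for x by simp
  show "(x, y) \<in> ({(u, al u) |u. u \<in> D} \<union> {(u, sg u) |u. u \<in> D})\<^sup>*" if "x \<in> D" "y \<in> D" for x y
    using assms(1) that by (simp add: comb_map_def)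
  show "0 < (\<rho> \<circ> Prim) x" "(\<rho> \<circ> Prim) (al x) = (\<rho> \<circ> Prim) x" if "x \<in> D" for x
  proof -
    have "\<forall>e\<in>ledges D. 0 < \<rho> e \<and> \<rho> (lrev al e) = \<rho> e" using assms(2) by (simp add: conformal_structure_def)
    from this[rule_format, of "Prim x"] that show "0 < (\<rho> \<circ> Prim) x" "(\<rho> \<circ> Prim) (al x) = (\<rho> \<circ> Prim) x" by simp_all
  qed
qed

lemma weighted_map_dual:
  assumes "comb_map D al sg" and "conformal_structure D al \<rho>"
  shows "weighted_map D al (sg \<circ> al) sg (\<rho> \<circ> Dua)"
proof -
  interpret P: weighted_map D al sg "sg \<circ> al" "\<rho> \<circ> Prim" by (rule weighted_map_primal[OF assms])
  let ?E = "{(u, al u) |u. u \<in> D} \<union> {(u, sg u) |u. u \<in> D}"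
  let ?F = "{(u, al u) |u. u \<in> D} \<union> {(u, (sg \<circ> al) u) |u. u \<in> D}"
  \<comment> \<open>A rotation step \<open>u \<mapsto> sg u\<close> is a reversal followed by a face step \<open>al u \<mapsto> sg (al (al u))\<close>.\<close>
  have "?E \<subseteq> ?F\<^sup>*"
  proof
    fix z assume "z \<in> ?E"
    then consider u where "u \<in> D" "z = (u, al u)" | u where "u \<in> D" "z = (u, sg u)" by blast
    then show "z \<in> ?F\<^sup>*"
    proof cases
      case 2
      have "(u, al u) \<in> ?F" "(al u, (sg \<circ> al) (al u)) \<in> ?F" using 2 P.al_D by blast+
      then show ?thesis using 2 P.al_al by (metis (no_types, lifting) comp_apply converse_rtrancl_into_rtrancl r_into_rtrancl)
    qed blast
  qed
  then have conn: "(x, y) \<in> ?F\<^sup>*" if "x \<in> D" "y \<in> D" for x y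
    using P.connected[OF that] rtrancl_subset_rtrancl by blast
  show ?thesis
  proof
    show "finite D" "D \<noteq> {}" by (simp_all add: P.finite_D P.D_ne)
    show "bij_betw (sg \<circ> al) D D" by (rule P.q_bij)
    show "al x \<in> D" "al (al x) = x" "al x \<noteq> x" "sg x = (sg \<circ> al) (al x)" if "x \<in> D" for x
      using that by (simp_all add: P.al_D P.al_al P.al_ne)
    show "0 < (\<rho> \<circ> Dua) x" "(\<rho> \<circ> Dua) (al x) = (\<rho> \<circ> Dua) x" if "x \<in> D" for x
    proof -
    have "\<forall>e\<in>ledges D. 0 < \<rho> e \<and> \<rho> (lrev al e) = \<rho> e" using assms(2) by (simp add: conformal_structure_def)
    from this[rule_format, of "Dua x"] that show "0 < (\<rho> \<circ> Dua) x" "(\<rho> \<circ> Dua) (al x) = (\<rho> \<circ> Dua) x" by simp_all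
  qed
  qed (rule conn)
qed

text \<open>A holomorphic form is determined by its real parts a on primal and b on dual edges:
  the imaginary parts are forced by \<open>*\<Phi> = -i\<Phi>\<close>.\<close>

definition real_parts_form ::
    "'d set \<Rightarrow> ('d ledge \<Rightarrow> real) \<Rightarrow> ('d \<Rightarrow> real) \<Rightarrow> ('d \<Rightarrow> real) \<Rightarrow> 'd ledge \<Rightarrow> complex" where
  "real_parts_form D \<rho> a b e = (case e of
      Prim x \<Rightarrow> if x \<in> D then Complex (a x) (- \<rho> (Dua x) * b x) else 0
    | Dua x \<Rightarrow> if x \<in> D then Complex (b x) (\<rho> (Prim x) * a x) else 0)"

lemma real_parts_form_simps [simp]:
  "x \<in> D \<Longrightarrow> real_parts_form D \<rho> a b (Prim x) = Complex (a x) (- \<rho> (Dua x) * b x)"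
  "x \<in> D \<Longrightarrow> real_parts_form D \<rho> a b (Dua x) = Complex (b x) (\<rho> (Prim x) * a x)"
  by (simp_all add: real_parts_form_def)

lemma real_parts_form_cong:
  assumes "\<And>x. x \<in> D \<Longrightarrow> a x = a' x" and "\<And>x. x \<in> D \<Longrightarrow> b x = b' x"
  shows "real_parts_form D \<rho> a b = real_parts_form D \<rho> a' b'"
proof
  fix e show "real_parts_form D \<rho> a b e = real_parts_form D \<rho> a' b' e"
    using assms by (cases e) (simp_all add: real_parts_form_def)
qed

lemma Re_loop_integral_real_parts_form:
  assumes "set xs \<subseteq> D"
  shows "Re (loop_integral (real_parts_form D \<rho> a b) (map Prim xs)) = (\<Sum>x\<leftarrow>xs. a x)"
    and "Re (loop_integral (real_parts_form D \<rho> a b) (map Dua xs)) = (\<Sum>x\<leftarrow>xs. b x)"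
  using assms by (induction xs) (simp_all add: loop_integral_def)

lemma holomorphic_form_real_parts_form:
  assumes cm: "comb_map D al sg" and cs: "conformal_structure D al \<rho>"
    and a: "harmonic D al sg (sg \<circ> al) (\<rho> \<circ> Prim) a"
    and b: "harmonic D al (sg \<circ> al) sg (\<rho> \<circ> Dua) b"
  shows "holomorphic_form D al sg \<rho> (real_parts_form D \<rho> a b)"
proof -
  interpret P: weighted_map D al sg "sg \<circ> al" "\<rho> \<circ> Prim" by (rule weighted_map_primal[OF cm cs])
  interpret Q: weighted_map D al "sg \<circ> al" sg "\<rho> \<circ> Dua" by (rule weighted_map_dual[OF cm cs])
  define \<Phi> where "\<Phi> = real_parts_form D \<rho> a b"
  have rho: "\<rho> (Prim x) * \<rho> (Dua x) = 1" if "x \<in> D" for x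
    using cs that by (simp add: conformal_structure_def)
  have "one_form D al \<Phi>"
    unfolding one_form_def
  proof (intro conjI ballI allI impI)
    fix e assume "e \<in> ledges D"
    then obtain x where x: "x \<in> D" "e = Prim x \<or> e = Dua x" by (auto simp: ledges_def)
    have "a (al x) = - a x" "b (al x) = - b x"
      using a b x(1) by (simp_all add: harmonic_def)
    then show "\<Phi> (lrev al e) = - \<Phi> e"
      using x P.w_al[OF x(1)] Q.w_al[OF x(1)] P.al_D[OF x(1)] by (auto simp: \<Phi>_def complex_eq_iff)
  next
    fix e assume "e \<notin> ledges D"
    then show "\<Phi> e = 0" by (cases e) (simp_all add: \<Phi>_def real_parts_form_def)
  qed
  moreover have "closed_form D al sg \<Phi>"
    unfolding closed_form_def
  proof (intro conjI ballI)
    fix d assume d: "d \<in> D"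
    have "Re (\<Sum>x\<in>orbit (sg \<circ> al) d. \<Phi> (Prim x)) = (\<Sum>x\<in>orbit (sg \<circ> al) d. a x)"
      "Im (\<Sum>x\<in>orbit (sg \<circ> al) d. \<Phi> (Prim x)) = (\<Sum>x\<in>orbit (sg \<circ> al) d. - ((\<rho> \<circ> Dua) x * b x))"
      using P.orbit_q_subset[OF d] by (auto simp: Re_sum Im_sum \<Phi>_def intro!: sum.cong)
    then show "(\<Sum>x\<in>orbit (sg \<circ> al) d. \<Phi> (Prim x)) = 0"
      using a b d by (simp add: harmonic_def complex_eq_iff sum_negf)
    have "Re (\<Sum>x\<in>orbit sg d. \<Phi> (Dua x)) = (\<Sum>x\<in>orbit sg d. b x)"
      "Im (\<Sum>x\<in>orbit sg d. \<Phi> (Dua x)) = (\<Sum>x\<in>orbit sg d. (\<rho> \<circ> Prim) x * a x)"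
      using P.orbit_p_subset[OF d] by (auto simp: Re_sum Im_sum \<Phi>_def intro!: sum.cong)
    then show "(\<Sum>x\<in>orbit sg d. \<Phi> (Dua x)) = 0"
      using a b d by (simp add: harmonic_def complex_eq_iff)
  qed
  moreover have "hodge al \<rho> \<Phi> e = - \<i> * \<Phi> e" if e: "e \<in> ledges D" for e
  proof -
    obtain x where x: "x \<in> D" "e = Prim x \<or> e = Dua x" using e by (auto simp: ledges_def)
    have "a (al x) = - a x" "b (al x) = - b x"
      using a b x(1) by (simp_all add: harmonic_def)
    then show ?thesis
      using x rho[OF x(1)] P.w_al[OF x(1)] Q.w_al[OF x(1)] P.al_D[OF x(1)]
      by (auto simp: \<Phi>_def hodge_def complex_eq_iff algebra_simps)
  qed
  ultimately show ?thesis by (simp add: holomorphic_form_def \<Phi>_def)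
qed

lemma holomorphic_form_Im:
  assumes cs: "conformal_structure D al \<rho>" and holo: "holomorphic_form D al sg \<rho> \<Phi>" and x: "x \<in> D"
  shows "Im (\<Phi> (Prim x)) = - \<rho> (Dua x) * Re (\<Phi> (Dua x))"
    and "Im (\<Phi> (Dua x)) = \<rho> (Prim x) * Re (\<Phi> (Prim x))"
proof -
  have "hodge al \<rho> \<Phi> (Prim x) = - \<i> * \<Phi> (Prim x)"
    using holo x unfolding holomorphic_form_def by simp
  then have star: "of_real (\<rho> (Dua x)) * \<Phi> (Dua x) = \<i> * \<Phi> (Prim x)" by (simp add: hodge_def)
  then show "Im (\<Phi> (Prim x)) = - \<rho> (Dua x) * Re (\<Phi> (Dua x))"
    by (simp add: complex_eq_iff)
  have "\<rho> (Prim x) * \<rho> (Dua x) = 1" using cs x by (simp add: conformal_structure_def)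
  then have "\<Phi> (Dua x) = of_real (\<rho> (Prim x) * \<rho> (Dua x)) * \<Phi> (Dua x)" by simp
  also have "\<dots> = of_real (\<rho> (Prim x)) * (of_real (\<rho> (Dua x)) * \<Phi> (Dua x))" by simp
  also have "\<dots> = \<i> * of_real (\<rho> (Prim x)) * \<Phi> (Prim x)" by (simp add: star)
  finally have "\<Phi> (Dua x) = \<i> * of_real (\<rho> (Prim x)) * \<Phi> (Prim x)" .
  then show "Im (\<Phi> (Dua x)) = \<rho> (Prim x) * Re (\<Phi> (Prim x))" by simp
qed

lemma holomorphic_form_eq_real_parts_form:
  assumes cm: "comb_map D al sg" and cs: "conformal_structure D al \<rho>"
    and holo: "holomorphic_form D al sg \<rho> \<Phi>"
  shows "harmonic D al sg (sg \<circ> al) (\<rho> \<circ> Prim) (\<lambda>x. Re (\<Phi> (Prim x)))"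
    and "harmonic D al (sg \<circ> al) sg (\<rho> \<circ> Dua) (\<lambda>x. Re (\<Phi> (Dua x)))"
    and "\<Phi> = real_parts_form D \<rho> (\<lambda>x. Re (\<Phi> (Prim x))) (\<lambda>x. Re (\<Phi> (Dua x)))"
proof -
  interpret P: weighted_map D al sg "sg \<circ> al" "\<rho> \<circ> Prim" by (rule weighted_map_primal[OF cm cs])
  have odd: "\<Phi> (Prim (al x)) = - \<Phi> (Prim x)" "\<Phi> (Dua (al x)) = - \<Phi> (Dua x)" if "x \<in> D" for x
    using holo that lrev.simps ledges_simps unfolding holomorphic_form_def one_form_def by metis+
  have closed: "(\<Sum>x\<in>orbit (sg \<circ> al) d. \<Phi> (Prim x)) = 0" "(\<Sum>x\<in>orbit sg d. \<Phi> (Dua x)) = 0"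
    if "d \<in> D" for d
    using holo that by (simp_all add: holomorphic_form_def closed_form_def)
  note Im_Prim = holomorphic_form_Im(1)[OF cs holo] and Im_Dua = holomorphic_form_Im(2)[OF cs holo]
  show "harmonic D al sg (sg \<circ> al) (\<rho> \<circ> Prim) (\<lambda>x. Re (\<Phi> (Prim x)))"
    unfolding harmonic_def
  proof (intro conjI ballI)
    fix y assume y: "y \<in> D"
    show "(\<Sum>x\<in>orbit (sg \<circ> al) y. Re (\<Phi> (Prim x))) = 0"
      using closed(1)[OF y] by (simp flip: Re_sum)
    have "(\<Sum>x\<in>orbit sg y. (\<rho> \<circ> Prim) x * Re (\<Phi> (Prim x))) = Im (\<Sum>x\<in>orbit sg y. \<Phi> (Dua x))"
      using P.orbit_p_subset[OF y] Im_Dua by (auto simp: Im_sum intro!: sum.cong)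
    then show "(\<Sum>x\<in>orbit sg y. (\<rho> \<circ> Prim) x * Re (\<Phi> (Prim x))) = 0"
      using closed(2)[OF y] by simp
  qed (simp add: odd)
  show "harmonic D al (sg \<circ> al) sg (\<rho> \<circ> Dua) (\<lambda>x. Re (\<Phi> (Dua x)))"
    unfolding harmonic_def
  proof (intro conjI ballI)
    fix y assume y: "y \<in> D"
    show "(\<Sum>x\<in>orbit sg y. Re (\<Phi> (Dua x))) = 0"
      using closed(2)[OF y] by (simp flip: Re_sum)
    have "(\<Sum>x\<in>orbit (sg \<circ> al) y. (\<rho> \<circ> Dua) x * Re (\<Phi> (Dua x))) =
        (\<Sum>x\<in>orbit (sg \<circ> al) y. - Im (\<Phi> (Prim x)))"
      using P.orbit_q_subset[OF y] Im_Prim by (auto intro!: sum.cong)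
    also have "\<dots> = - Im (\<Sum>x\<in>orbit (sg \<circ> al) y. \<Phi> (Prim x))" by (simp add: Im_sum sum_negf)
    finally have "(\<Sum>x\<in>orbit (sg \<circ> al) y. (\<rho> \<circ> Dua) x * Re (\<Phi> (Dua x))) =
        - Im (\<Sum>x\<in>orbit (sg \<circ> al) y. \<Phi> (Prim x))" .
    then show "(\<Sum>x\<in>orbit (sg \<circ> al) y. (\<rho> \<circ> Dua) x * Re (\<Phi> (Dua x))) = 0"
      using closed(1)[OF y] by simp
  qed (simp add: odd)
  show "\<Phi> = real_parts_form D \<rho> (\<lambda>x. Re (\<Phi> (Prim x))) (\<lambda>x. Re (\<Phi> (Dua x)))"
  proof
    fix e
    show "\<Phi> e = real_parts_form D \<rho> (\<lambda>x. Re (\<Phi> (Prim x))) (\<lambda>x. Re (\<Phi> (Dua x))) e"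
    proof (cases "e \<in> ledges D")
      case True
      then obtain x where "x \<in> D" "e = Prim x \<or> e = Dua x" by (auto simp: ledges_def)
      then show ?thesis using Im_Prim Im_Dua by (auto simp: complex_eq_iff)
    next
      case False
      then have "\<Phi> e = 0" using holo by (simp add: holomorphic_form_def one_form_def)
      then show ?thesis using False by (cases e) (simp_all add: real_parts_form_def)
    qed
  qed
qed

lemma ex1_holomorphic_form_by_real_parts:
  assumes cm: "comb_map D al sg" and cs: "conformal_structure D al \<rho>"
    and Q_iff: "\<And>a b. harmonic D al sg (sg \<circ> al) (\<rho> \<circ> Prim) a \<Longrightarrow> harmonic D al (sg \<circ> al) sg (\<rho> \<circ> Dua) b \<Longrightarrow>
        Q (real_parts_form D \<rho> a b) \<longleftrightarrow> P a \<and> R b"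
    and ex_P: "\<exists>a. harmonic D al sg (sg \<circ> al) (\<rho> \<circ> Prim) a \<and> P a"
    and ex_R: "\<exists>b. harmonic D al (sg \<circ> al) sg (\<rho> \<circ> Dua) b \<and> R b"
    and unique_P: "\<And>a a' x. harmonic D al sg (sg \<circ> al) (\<rho> \<circ> Prim) a \<Longrightarrow> P a \<Longrightarrow>
        harmonic D al sg (sg \<circ> al) (\<rho> \<circ> Prim) a' \<Longrightarrow> P a' \<Longrightarrow> x \<in> D \<Longrightarrow> a x = a' x"
    and unique_R: "\<And>b b' x. harmonic D al (sg \<circ> al) sg (\<rho> \<circ> Dua) b \<Longrightarrow> R b \<Longrightarrow>
        harmonic D al (sg \<circ> al) sg (\<rho> \<circ> Dua) b' \<Longrightarrow> R b' \<Longrightarrow> x \<in> D \<Longrightarrow> b x = b' x"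
  shows "\<exists>!\<Phi>. holomorphic_form D al sg \<rho> \<Phi> \<and> Q \<Phi>"
proof (rule ex_ex1I)
  obtain a b where "harmonic D al sg (sg \<circ> al) (\<rho> \<circ> Prim) a" "P a"
    and "harmonic D al (sg \<circ> al) sg (\<rho> \<circ> Dua) b" "R b"
    using ex_P ex_R by blast
  then show "\<exists>\<Phi>. holomorphic_form D al sg \<rho> \<Phi> \<and> Q \<Phi>"
    using holomorphic_form_real_parts_form[OF cm cs] Q_iff by blast
next
  fix \<Phi> \<Psi>
  assume \<Phi>: "holomorphic_form D al sg \<rho> \<Phi> \<and> Q \<Phi>" and \<Psi>: "holomorphic_form D al sg \<rho> \<Psi> \<and> Q \<Psi>"
  note \<Phi>_parts = holomorphic_form_eq_real_parts_form[OF cm cs conjunct1[OF \<Phi>]]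
  note \<Psi>_parts = holomorphic_form_eq_real_parts_form[OF cm cs conjunct1[OF \<Psi>]]
  have "P (\<lambda>x. Re (\<Phi> (Prim x))) \<and> R (\<lambda>x. Re (\<Phi> (Dua x)))"
    using Q_iff[OF \<Phi>_parts(1,2)] \<Phi> \<Phi>_parts(3) by simp
  moreover have "P (\<lambda>x. Re (\<Psi> (Prim x))) \<and> R (\<lambda>x. Re (\<Psi> (Dua x)))"
    using Q_iff[OF \<Psi>_parts(1,2)] \<Psi> \<Psi>_parts(3) by simp
  ultimately have "real_parts_form D \<rho> (\<lambda>x. Re (\<Phi> (Prim x))) (\<lambda>x. Re (\<Phi> (Dua x))) =
      real_parts_form D \<rho> (\<lambda>x. Re (\<Psi> (Prim x))) (\<lambda>x. Re (\<Psi> (Dua x)))"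
    using unique_P[OF \<Phi>_parts(1) _ \<Psi>_parts(1)] unique_R[OF \<Phi>_parts(2) _ \<Psi>_parts(2)]
    by (intro real_parts_form_cong) blast+
  then show "\<Phi> = \<Psi>" using \<Phi>_parts(3) \<Psi>_parts(3) by simp
qed

lemma Re_periods_real_parts_form:
  "(\<forall>\<gamma>. is_loop D al sg \<gamma> \<and> P \<gamma> \<longrightarrow> Re (loop_integral (real_parts_form D \<rho> a b) \<gamma>) = 0) \<longleftrightarrow>
    (\<forall>xs. orbit_cycle D al sg xs \<and> P (map Prim xs) \<longrightarrow> (\<Sum>x\<leftarrow>xs. a x) = 0) \<and>
    (\<forall>xs. orbit_cycle D al (sg \<circ> al) xs \<and> P (map Dua xs) \<longrightarrow> (\<Sum>x\<leftarrow>xs. b x) = 0)"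
  (is "?L \<longleftrightarrow> ?R")
proof
  have subset: "orbit_cycle D al f xs \<Longrightarrow> set xs \<subseteq> D" for f xs by (simp add: orbit_cycle_def)
  show "?L \<Longrightarrow> ?R"
    using Re_loop_integral_real_parts_form subset is_loop_map_Prim is_loop_map_Dua by metis
  assume R: ?R
  show ?L
  proof (intro allI impI, elim conjE)
    fix \<gamma> assume \<gamma>: "is_loop D al sg \<gamma>" "P \<gamma>"
    then show "Re (loop_integral (real_parts_form D \<rho> a b) \<gamma>) = 0"
    proof (cases rule: is_loop_cases)
      case (primal xs)
      then show ?thesis using R \<gamma> subset Re_loop_integral_real_parts_form(1) is_loop_map_Prim by metis
    next
      case (dual xs)
      then show ?thesis using R \<gamma> subset Re_loop_integral_real_parts_form(2) is_loop_map_Dua by metis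
    qed
  qed
qed

lemma crossing_cycles_primal_A:
  assumes cm: "comb_map D al sg" and cs: "conformal_structure D al \<rho>"
    and A: "simple_loop D al sg (map Prim A)" and B: "simple_loop D al sg (map Dua B)"
    and once: "card {i. i < length (map Prim A) \<and> (\<exists>f\<in>set (map Dua B). dual_edges al (map Prim A ! i) f)} = 1"
  shows "crossing_cycles D al (sg \<circ> al) sg (\<rho> \<circ> Dua) A B"
proof -
  interpret G: weighted_map D al "sg \<circ> al" sg "\<rho> \<circ> Dua" by (rule weighted_map_dual[OF cm cs])
  have A': "orbit_cycle D al sg A" "distinct (map (orbit sg) A)" "distinct_edges al A"
    using A by (simp_all add: simple_loop_map_Prim)
  have B': "orbit_cycle D al (sg \<circ> al) B" "distinct_edges al B"
    using B by (simp_all add: simple_loop_map_Dua)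
  have "(\<exists>f\<in>set (map Dua B). dual_edges al (map Prim A ! i) f) \<longleftrightarrow> crosses al B (A ! i)"
    if "i < length A" for i
  proof -
    have "A ! i \<in> D" using A'(1) nth_mem[OF that] by (auto simp: orbit_cycle_def)
    moreover have "set B \<subseteq> D" using B'(1) by (simp add: orbit_cycle_def)
    ultimately show ?thesis using ex_dual_edge_Prim_iff[OF G.al_al] that by simp
  qed
  then have "{i. i < length (map Prim A) \<and> (\<exists>f\<in>set (map Dua B). dual_edges al (map Prim A ! i) f)} =
      {i. i < length A \<and> crosses al B (A ! i)}"
    by (intro Collect_cong conj_cong) simp_all
  then show ?thesis
    using once G.weighted_map_axioms A' B' by (simp add: crossing_cycles_def crossing_cycles_axioms_def)
qed

lemma crossing_cycles_dual_A:
  assumes cm: "comb_map D al sg" and cs: "conformal_structure D al \<rho>"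
    and A: "simple_loop D al sg (map Dua A)" and B: "simple_loop D al sg (map Prim B)"
    and once: "card {i. i < length (map Dua A) \<and> (\<exists>f\<in>set (map Prim B). dual_edges al (map Dua A ! i) f)} = 1"
  shows "crossing_cycles D al sg (sg \<circ> al) (\<rho> \<circ> Prim) A B"
proof -
  interpret G: weighted_map D al sg "sg \<circ> al" "\<rho> \<circ> Prim" by (rule weighted_map_primal[OF cm cs])
  have A': "orbit_cycle D al (sg \<circ> al) A" "distinct (map (orbit (sg \<circ> al)) A)" "distinct_edges al A"
    using A by (simp_all add: simple_loop_map_Dua)
  have B': "orbit_cycle D al sg B" "distinct_edges al B"
    using B by (simp_all add: simple_loop_map_Prim)
  have "(\<exists>f\<in>set (map Prim B). dual_edges al (map Dua A ! i) f) \<longleftrightarrow> crosses al B (A ! i)"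
    if "i < length A" for i
  proof -
    have "A ! i \<in> D" using A'(1) nth_mem[OF that] by (auto simp: orbit_cycle_def)
    moreover have "set B \<subseteq> D" using B'(1) by (simp add: orbit_cycle_def)
    ultimately show ?thesis using ex_dual_edge_Dua_iff[OF G.al_al] that by simp
  qed
  then have "{i. i < length (map Dua A) \<and> (\<exists>f\<in>set (map Prim B). dual_edges al (map Dua A ! i) f)} =
      {i. i < length A \<and> crosses al B (A ! i)}"
    by (intro Collect_cong conj_cong) simp_all
  then show ?thesis
    using once G.weighted_map_axioms A' B' by (simp add: crossing_cycles_def crossing_cycles_axioms_def)
qed

lemma ex1_holomorphic_form_primal_A:
  assumes cm: "comb_map D al sg" and cs: "conformal_structure D al \<rho>"
    and A: "simple_loop D al sg (map Prim A)" and B: "simple_loop D al sg (map Dua B)"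
    and once: "card {i. i < length (map Prim A) \<and> (\<exists>f\<in>set (map Dua B). dual_edges al (map Prim A ! i) f)} = 1"
  shows "\<exists>!\<Phi>. holomorphic_form D al sg \<rho> \<Phi> \<and> Re (loop_integral \<Phi> (map Dua B)) = 1 \<and>
    (\<forall>\<gamma>. is_loop D al sg \<gamma> \<and> (\<forall>e\<in>set \<gamma>. \<forall>a\<in>set (map Prim A). \<not> dual_edges al e a)
      \<longrightarrow> Re (loop_integral \<Phi> \<gamma>) = 0)"
proof -
  interpret G: weighted_map D al sg "sg \<circ> al" "\<rho> \<circ> Prim" by (rule weighted_map_primal[OF cm cs])
  interpret M: crossing_cycles D al "sg \<circ> al" sg "\<rho> \<circ> Dua" A B by (rule crossing_cycles_primal_A[OF assms])
  have AD: "set A \<subseteq> D" and BD: "set B \<subseteq> D"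
    using M.A_cycle M.B_cycle by (simp_all add: orbit_cycle_def)
  have avoid_A: "(\<forall>e\<in>set (map Dua xs). \<forall>a\<in>set (map Prim A). \<not> dual_edges al e a) \<longleftrightarrow>
      (\<forall>x\<in>set xs. \<not> crosses al A x)" if "orbit_cycle D al (sg \<circ> al) xs" for xs
  proof -
    have "(\<exists>a\<in>set (map Prim A). dual_edges al (Dua x) a) \<longleftrightarrow> crosses al A x" if "x \<in> set xs" for x
      using ex_dual_edge_Dua_iff[OF G.al_al _ AD, of x] that \<open>orbit_cycle D al (sg \<circ> al) xs\<close>
      by (auto simp: orbit_cycle_def)
    then show ?thesis by auto
  qed
  show ?thesis
  proof (rule ex1_holomorphic_form_by_real_parts[OF cm cs, where P = "\<lambda>a. \<forall>x\<in>D. a x = 0" and R = M.periods_normalized])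
    fix a b
    assume a: "harmonic D al sg (sg \<circ> al) (\<rho> \<circ> Prim) a" and b: "harmonic D al (sg \<circ> al) sg (\<rho> \<circ> Dua) b"
    show "(Re (loop_integral (real_parts_form D \<rho> a b) (map Dua B)) = 1 \<and>
        (\<forall>\<gamma>. is_loop D al sg \<gamma> \<and> (\<forall>e\<in>set \<gamma>. \<forall>a\<in>set (map Prim A). \<not> dual_edges al e a)
          \<longrightarrow> Re (loop_integral (real_parts_form D \<rho> a b) \<gamma>) = 0)) \<longleftrightarrow> (\<forall>x\<in>D. a x = 0) \<and> M.periods_normalized b"
      unfolding Re_periods_real_parts_form Re_loop_integral_real_parts_form[OF BD]
        G.harmonic_eq_0_iff_periods_vanish[OF a, symmetric] M.periods_normalized_def
      using avoid_A by auto
  next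
    show "\<exists>c. harmonic D al (sg \<circ> al) sg (\<rho> \<circ> Dua) c \<and> M.periods_normalized c"
      by (rule M.harmonic_periods_normalized_exists)
    show "\<exists>c. harmonic D al sg (sg \<circ> al) (\<rho> \<circ> Prim) c \<and> (\<forall>x\<in>D. c x = 0)"
      by (intro exI[of _ "\<lambda>_. 0"]) (simp add: harmonic_def)
  qed (auto intro: M.harmonic_periods_normalized_unique)
qed

lemma ex1_holomorphic_form_dual_A:
  assumes cm: "comb_map D al sg" and cs: "conformal_structure D al \<rho>"
    and A: "simple_loop D al sg (map Dua A)" and B: "simple_loop D al sg (map Prim B)"
    and once: "card {i. i < length (map Dua A) \<and> (\<exists>f\<in>set (map Prim B). dual_edges al (map Dua A ! i) f)} = 1"
  shows "\<exists>!\<Phi>. holomorphic_form D al sg \<rho> \<Phi> \<and> Re (loop_integral \<Phi> (map Prim B)) = 1 \<and>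
    (\<forall>\<gamma>. is_loop D al sg \<gamma> \<and> (\<forall>e\<in>set \<gamma>. \<forall>a\<in>set (map Dua A). \<not> dual_edges al e a)
      \<longrightarrow> Re (loop_integral \<Phi> \<gamma>) = 0)"
proof -
  interpret G: weighted_map D al "sg \<circ> al" sg "\<rho> \<circ> Dua" by (rule weighted_map_dual[OF cm cs])
  interpret M: crossing_cycles D al sg "sg \<circ> al" "\<rho> \<circ> Prim" A B by (rule crossing_cycles_dual_A[OF assms])
  have AD: "set A \<subseteq> D" and BD: "set B \<subseteq> D"
    using M.A_cycle M.B_cycle by (simp_all add: orbit_cycle_def)
  have avoid_A: "(\<forall>e\<in>set (map Prim xs). \<forall>a\<in>set (map Dua A). \<not> dual_edges al e a) \<longleftrightarrow>
      (\<forall>x\<in>set xs. \<not> crosses al A x)" if "orbit_cycle D al sg xs" for xs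
  proof -
    have "(\<exists>a\<in>set (map Dua A). dual_edges al (Prim x) a) \<longleftrightarrow> crosses al A x" if "x \<in> set xs" for x
      using ex_dual_edge_Prim_iff[OF G.al_al _ AD, of x] that \<open>orbit_cycle D al sg xs\<close>
      by (auto simp: orbit_cycle_def)
    then show ?thesis by auto
  qed
  show ?thesis
  proof (rule ex1_holomorphic_form_by_real_parts[OF cm cs, where P = M.periods_normalized and R = "\<lambda>b. \<forall>x\<in>D. b x = 0"])
    fix a b
    assume a: "harmonic D al sg (sg \<circ> al) (\<rho> \<circ> Prim) a" and b: "harmonic D al (sg \<circ> al) sg (\<rho> \<circ> Dua) b"
    show "(Re (loop_integral (real_parts_form D \<rho> a b) (map Prim B)) = 1 \<and>
        (\<forall>\<gamma>. is_loop D al sg \<gamma> \<and> (\<forall>e\<in>set \<gamma>. \<forall>a\<in>set (map Dua A). \<not> dual_edges al e a)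
          \<longrightarrow> Re (loop_integral (real_parts_form D \<rho> a b) \<gamma>) = 0)) \<longleftrightarrow> M.periods_normalized a \<and> (\<forall>x\<in>D. b x = 0)"
      unfolding Re_periods_real_parts_form Re_loop_integral_real_parts_form[OF BD]
        G.harmonic_eq_0_iff_periods_vanish[OF b, symmetric] M.periods_normalized_def
      using avoid_A by auto
  next
    show "\<exists>c. harmonic D al sg (sg \<circ> al) (\<rho> \<circ> Prim) c \<and> M.periods_normalized c"
      by (rule M.harmonic_periods_normalized_exists)
    show "\<exists>c. harmonic D al (sg \<circ> al) sg (\<rho> \<circ> Dua) c \<and> (\<forall>x\<in>D. c x = 0)"
      by (intro exI[of _ "\<lambda>_. 0"]) (simp add: harmonic_def)
  qed (auto intro: M.harmonic_periods_normalized_unique)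
qed

theorem mainTheorem10:
  fixes D :: "'d set" and al sg :: "'d \<Rightarrow> 'd" and \<rho> :: "'d ledge \<Rightarrow> real"
    and A B :: "'d ledge list"
  assumes "comb_map D al sg"
    and "conformal_structure D al \<rho>"
    and "simple_loop D al sg A" and "simple_loop D al sg B"
    and "loops_disjoint al sg A B"
    and "card {i. i < length A \<and> (\<exists>f\<in>set B. dual_edges al (A ! i) f)} = 1"
  shows "\<exists>!\<Phi>. holomorphic_form D al sg \<rho> \<Phi> \<and>
            Re (loop_integral \<Phi> B) = 1 \<and>
            (\<forall>\<gamma>. is_loop D al sg \<gamma> \<and> (\<forall>e\<in>set \<gamma>. \<forall>a\<in>set A. \<not> dual_edges al e a)
                 \<longrightarrow> Re (loop_integral \<Phi> \<gamma>) = 0)"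
proof -
  have crossing: "{i. i < length A \<and> (\<exists>f\<in>set B. dual_edges al (A ! i) f)} \<noteq> {}"
    using assms(6) by force
  from assms(3) have "is_loop D al sg A" by (simp add: simple_loop_def)
  moreover from assms(4) have "is_loop D al sg B" by (simp add: simple_loop_def)
  ultimately show ?thesis
  proof (cases rule: is_loop_cases[case_product is_loop_cases])
    case (primal_dual A' B')
    then show ?thesis using ex1_holomorphic_form_primal_A assms(1-4,6) by blast
  next
    case (dual_primal A' B')
    then show ?thesis using ex1_holomorphic_form_dual_A assms(1-4,6) by blast
  qed (use crossing in auto)
qed

end
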